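(* In the setting below, assume $\varphi(U)$ is an open box $\prod_{i=1}^n(-r_i,r_i)$. Then: (i) there exists a smooth $\hat h$ on $\varphi(U)$ satisfying $\frac{\partial\hat h}{\partial q^\mu}=u_\mu$ for all $\mu=1,\dots,n-m$ if and only if $\frac{\partial u_\nu}{\partial q^\mu}=\frac{\partial u_\mu}{\partial q^\nu}$ on $\varphi(U)$ for all $\mu,\nu\le n-m$ (equivalently, in coordinate-free terms, $\mathrm d\big(\mathrm dh\circ\mathbb F(\mathfrak K\circ\hat{\mathfrak p})\circ(\mathbb F\mathfrak H)^{-1}\big)(\mathsf u,\mathsf v)=0$ for all $\mathsf u,\mathsf v\in\mathbb F\mathfrak H(\hat W)$); (ii) in that case, for every constant $\varpi$, the function $$\hat h(q^1,\dots,q^n)=\sum_{\mu=1}^{n-m}\int_0^{q^\mu}u_\mu(0,\dots,0,t,q^{\mu+1},\dots,q^n)\,\mathrm dt+\frac{\varpi}{2}\sum_{a=1}^m(q^{n-m+a})^2$$ (with $t$ in the $\mu$-th slot) is such a solution; (iii) a solution $\hat h$ having $\mathbf 0$ as a critical point with positive-definite Hessian exists if and only if the matrix $\mathbb M_{\mu\nu}:=\frac{\partial u_\nu}{\partial q^\mu}(\mathbf 0)=\frac{\partial^2h}{\partial q^\mu\partial q^k}(\mathbf 0)\hat{\mathbb P}^{k\tau}(\mathbf 0)\mathbb K_{\tau\nu}(\mathbf 0)$ is positive-definite; and when $\mathbb M$ is positive-definite with least eigenvalue $\lambda_{\min}$, the function in (ii) has this property as soon as $$\varpi>\frac{1}{\lambda_{\min}}\sum_{\mu=1}^{n-m}\sum_{a=1}^m\Big(\frac{\partial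 u_\mu}{\partial q^{n-m+a}}(\mathbf 0)\Big)^2.$$
   Context: Setting: $\mathfrak H$ is a quadratic form on $T^*Q$ ($Q$ a smooth $n$-manifold), i.e. $\mathfrak H(\alpha)=\tfrac12\langle\alpha,\rho^\sharp(\alpha)\rangle$ for a smooth positive-definite fibered inner product $\rho$ on $TQ$; $\mathbb F\mathfrak H=\rho^\sharp:T^*Q\to TQ$ is its fiber derivative ($\langle\beta,\mathbb Ff(\alpha)\rangle=\frac{d}{dt}f(\alpha+t\beta)|_{t=0}$ for smooth $f$ on $T^*Q$). $h:Q\to\mathbb R$ is smooth, $W\subseteq T^*Q$ is a subbundle of rank $m$, $1\le m<n$. $q_0$ is a critical point of $h$ and $(U,\varphi=(q^1,\dots,q^n))$ is a chart with $\varphi(q_0)=\mathbf 0$ such that $\hat W:=(\mathbb F\mathfrak H)^{-1}(\mathrm{span}\{\partial/\partial q^1,\dots,\partial/\partial q^{n-m}\})$ is a complement of $W$ on $U$, with $\hat{\mathfrak p}$ the projection onto $\hat W$ along $W$. $\mathfrak K$ is a quadratic form on $\hat W$ (in applications a solution of the kinetic equation $\{\mathfrak K\circ\hat{\mathfrak p},\mathfrak H\}|_{\hat W}=0$, $\{\cdot,\cdot\}$ the canonical Poisson bracket). The equation $\partial\hat h/\partial q^\mu=u_\mu$ is the local form of the potential matching equation $\big(\mathrm d\hat h\circ\mathbb F\mathfrak H-\mathrm dh\circ\mathbb F(\mathfrak K\circ\hat{\mathfrak p})\big)(\sigma)=0$ for all $\sigma\in\hat W$. Indices: $k\in\{1,\dots,n\}$,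 Greek indices in $\{1,\dots,n-m\}$, $a\in\{1,\dots,m\}$, summation over repeated indices. $\mathbb H_{ij}:=\langle(\mathbb F\mathfrak H)^{-1}(\partial/\partial q^i),\partial/\partial q^j\rangle$; $\sigma_\mu:=\mathbb H_{\mu k}\mathrm dq^k$ is a basis of $\hat W$; $\hat{\mathbb P}^{k\mu}$ is defined by $\hat{\mathfrak p}(\mathrm dq^k)=\hat{\mathbb P}^{k\mu}\sigma_\mu$; $\mathbb K_{\mu\nu}$ is defined by $\mathfrak K(a^\mu\sigma_\mu)=\tfrac12\mathbb K_{\mu\nu}a^\mu a^\nu$. Functions on $U$ are identified with their local representatives, and $u_\mu:=\frac{\partial h}{\partial q^k}\hat{\mathbb P}^{k\tau}\mathbb K_{\tau\mu}$. *)

theory Defs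
  imports "HOL-Analysis.Analysis"
begin

text \<open>Points of the chart image are modelled as functions nat => real; coordinates
  q^1..q^n of the paper are the indices 0..n-1 (0-based), all coordinates with index
  >= n are 0. The topology on nat => real is the product topology (Function_Topology).\<close>

type_synonym pt = "nat \<Rightarrow> real"

definition box_n :: "nat \<Rightarrow> (nat \<Rightarrow> real) \<Rightarrow> pt set" where
  "box_n n r = {x. (\<forall>i<n. - r i < x i \<and> x i < r i) \<and> (\<forall>i\<ge>n. x i = 0)}"

definition pd :: "nat \<Rightarrow> (pt \<Rightarrow> real) \<Rightarrow> pt \<Rightarrow> real" where
  "pd i f x = deriv (\<lambda>t. f (x(i := t))) (x i)"

fun iter_pd :: "nat list \<Rightarrow> (pt \<Rightarrow> real) \<Rightarrow> pt \<Rightarrow> real" where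
  "iter_pd [] f = f"
| "iter_pd (i # is) f = pd i (iter_pd is f)"

definition smooth_on :: "nat \<Rightarrow> pt set \<Rightarrow> (pt \<Rightarrow> real) \<Rightarrow> bool" where
  "smooth_on n S f \<longleftrightarrow>
     (\<forall>is. set is \<subseteq> {..<n} \<longrightarrow>
        continuous_on S (iter_pd is f) \<and>
        (\<forall>i<n. \<forall>x\<in>S. (\<lambda>t. iter_pd is f (x(i := t))) differentiable (at (x i))))"

definition oint :: "real \<Rightarrow> real \<Rightarrow> (real \<Rightarrow> real) \<Rightarrow> real" where
  "oint a b f = (if a \<le> b then integral {a..b} f else - integral {b..a} f)"

text \<open>u_mu = (dh/dq^k) P^{k tau} K_{tau mu}; P k tau, K tau mu are the local
  representatives of hat-P^{k tau} and K_{tau mu}.\<close>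
definition uloc :: "nat \<Rightarrow> nat \<Rightarrow> (pt \<Rightarrow> real) \<Rightarrow> (nat \<Rightarrow> nat \<Rightarrow> pt \<Rightarrow> real)
    \<Rightarrow> (nat \<Rightarrow> nat \<Rightarrow> pt \<Rightarrow> real) \<Rightarrow> nat \<Rightarrow> pt \<Rightarrow> real" where
  "uloc n m h P K \<mu> x = (\<Sum>k<n. \<Sum>\<tau><n-m. pd k h x * P k \<tau> x * K \<tau> \<mu> x)"

definition hhat :: "nat \<Rightarrow> nat \<Rightarrow> (nat \<Rightarrow> pt \<Rightarrow> real) \<Rightarrow> real \<Rightarrow> pt \<Rightarrow> real" where
  "hhat n m u w x =
     (\<Sum>\<mu><n-m. oint 0 (x \<mu>)
         (\<lambda>t. u \<mu> (\<lambda>i. if i < \<mu> then 0 else if i = \<mu> then t else x i)))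
     + w / 2 * (\<Sum>a<m. (x (n - m + a))^2)"

definition posdef :: "nat \<Rightarrow> (nat \<Rightarrow> nat \<Rightarrow> real) \<Rightarrow> bool" where
  "posdef d A \<longleftrightarrow> (\<forall>i<d. \<forall>j<d. A i j = A j i) \<and>
     (\<forall>v. (\<exists>i<d. v i \<noteq> 0) \<longrightarrow> (\<Sum>i<d. \<Sum>j<d. v i * A i j * v j) > 0)"

definition eigenvalues :: "nat \<Rightarrow> (nat \<Rightarrow> nat \<Rightarrow> real) \<Rightarrow> real set" where
  "eigenvalues d A = {l. \<exists>v. (\<exists>i<d. v i \<noteq> 0) \<and> (\<forall>i<d. (\<Sum>j<d. A i j * v j) = l * v i)}"

definition lambda_min :: "nat \<Rightarrow> (nat \<Rightarrow> nat \<Rightarrow> real) \<Rightarrow> real" where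
  "lambda_min d A = Min (eigenvalues d A)"

end

theory Submission
  imports Defs "Jordan_Normal_Form.Char_Poly"
begin

text \<open>Part (i) is the Poincare lemma on a box. Symmetry of the Jacobian of \<open>u\<close> is necessary
  by Schwarz's theorem; it is sufficient because the \<open>\<nu>\<close>-th partial derivatives of the iterated
  axis integrals in (ii) then telescope to \<open>u\<^sub>\<nu>\<close>. The quadratic term in the last \<open>m\<close>
  coordinates does not disturb this, and it makes the Hessian of \<open>hhat\<close> at \<open>0\<close> the block matrix
  with blocks \<open>M\<close>, \<open>C\<close> and \<open>\<varpi> I\<close>, where \<open>C\<close> collects the derivatives of \<open>u\<close> in the last \<open>m\<close>
  coordinates. By Cauchy-Schwarz on the mixed term this matrix is positive definite once
  \<open>\<varpi> \<lambda>\<^sub>m\<^sub>i\<^sub>n(M) > |C|\<^sup>2\<close>; conversely \<open>M\<close> is a leading block of the Hessian of every solution,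
  which gives (iii).\<close>

section \<open>Oriented integrals\<close>

lemma oint_stretch: "oint 0 a g = a * integral {0..1} (\<lambda>s. g (a * s))"
proof (cases a "0::real" rule: linorder_cases)
  case less
  have "integral ((\<lambda>x. x / a) ` {a..0}) (\<lambda>x. g (a * x)) = (1 / \<bar>a\<bar>) *\<^sub>R integral {a..0} g"
    using less by (intro integral_stretch_real) simp
  then show ?thesis
    using less by (simp add: oint_def divide_inverse image_mult_atLeastAtMost_if')
next
  case equal
  then show ?thesis by (simp add: oint_def)
next
  case greater
  have "integral ((\<lambda>x. x / a) ` {0..a}) (\<lambda>x. g (a * x)) = (1 / \<bar>a\<bar>) *\<^sub>R integral {0..a} g"
    using greater by (intro integral_stretch_real) simp
  then show ?thesis using greater by (simp add: oint_def)
qed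

lemma oint_cong: "(\<And>t. t \<in> {min 0 a..max 0 a} \<Longrightarrow> f t = g t) \<Longrightarrow> oint 0 a f = oint 0 a g"
  unfolding oint_def by (cases "0 \<le> a") (auto intro!: integral_cong)

lemma oint_eq_integral_diff:
  assumes "continuous_on {c..d} g" "c \<le> 0" "0 \<le> d" "b \<in> {c..d}"
  shows "oint 0 b g = integral {c..b} g - integral {c..0} g"
proof (cases "0 \<le> b")
  case True
  have "integral {c..0} g + integral {0..b} g = integral {c..b} g"
    by (rule Henstock_Kurzweil_Integration.integral_combine) (use assms True in auto,
        rule integrable_continuous_interval, rule continuous_on_subset[OF assms(1)], use assms True in auto)
  then show ?thesis using True by (simp add: oint_def)
next
  case False
  have "integral {c..b} g + integral {b..0} g = integral {c..0} g"
    by (rule Henstock_Kurzweil_Integration.integral_combine) (use assms False in auto,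
        rule integrable_continuous_interval, rule continuous_on_subset[OF assms(1)], use assms False in auto)
  then show ?thesis using False by (simp add: oint_def)
qed

lemma oint_has_derivative_upper:
  assumes g: "continuous_on {-R<..<R} g" and a: "a \<in> {-R<..<R}"
  shows "((\<lambda>b. oint 0 b g) has_real_derivative g a) (at a)"
proof -
  define c where "c = (min a 0 - R) / 2"
  define d where "d = (max a 0 + R) / 2"
  have cd: "-R < c" "c < min a 0" "max a 0 < d" "d < R" using a by (auto simp: c_def d_def)
  have gc: "continuous_on {c..d} g" by (rule continuous_on_subset[OF g]) (use cd in auto)
  have "((\<lambda>b. integral {c..b} g) has_real_derivative g a) (at a within {c..d})"
    by (rule integral_has_real_derivative[OF gc]) (use cd in auto)
  then have D: "((\<lambda>b. integral {c..b} g - integral {c..0} g) has_real_derivative g a) (at a)"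
    using cd DERIV_diff[OF _ DERIV_const] by (fastforce simp: at_within_Icc_at)
  have "eventually (\<lambda>b. b \<in> {c<..<d}) (nhds a)"
    using cd by (intro eventually_nhds_in_open) auto
  then have ev: "eventually (\<lambda>b. oint 0 b g = integral {c..b} g - integral {c..0} g) (nhds a)"
    by eventually_elim (use cd gc in \<open>auto intro!: oint_eq_integral_diff\<close>)
  show ?thesis using DERIV_cong_ev[OF refl ev refl] D by blast
qed

lemma oint_fundamental_theorem:
  assumes "\<And>t. t \<in> {min 0 a..max 0 a} \<Longrightarrow> (f has_real_derivative f' t) (at t)"
  shows "oint 0 a f' = f a - f 0"
proof (cases "0 \<le> a")
  case True
  have "(f' has_integral (f a - f 0)) {0..a}"
    by (rule fundamental_theorem_of_calculus[OF True])
       (use assms True in \<open>auto simp: has_real_derivative_iff_has_vector_derivative[symmetric]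
          intro: has_field_derivative_at_within\<close>)
  then show ?thesis using True by (simp add: oint_def integral_unique)
next
  case False
  have "(f' has_integral (f 0 - f a)) {a..0}"
    by (rule fundamental_theorem_of_calculus)
       (use assms False in \<open>auto simp: has_real_derivative_iff_has_vector_derivative[symmetric]
          intro: has_field_derivative_at_within\<close>)
  then show ?thesis using False by (simp add: oint_def integral_unique)
qed

lemma oint_leibniz_rule:
  fixes K K' :: "real \<Rightarrow> real \<Rightarrow> real"
  assumes U: "s0 \<in> U" "open U" "convex U"
    and K: "\<And>s t. s \<in> U \<Longrightarrow> t \<in> {min 0 a..max 0 a} \<Longrightarrow> ((\<lambda>s. K s t) has_real_derivative K' s t) (at s)"
    and K'_cont: "continuous_on (U \<times> {min 0 a..max 0 a}) (\<lambda>(s, t). K' s t)"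
    and K_cont: "\<And>s. s \<in> U \<Longrightarrow> continuous_on {min 0 a..max 0 a} (K s)"
  shows "((\<lambda>s. oint 0 a (K s)) has_real_derivative oint 0 a (K' s0)) (at s0)"
proof -
  have I: "cbox (min 0 a) (max 0 a) = {min 0 a..max 0 a}" by (simp add: box_real)
  have "((\<lambda>s. integral {min 0 a..max 0 a} (K s)) has_real_derivative
      integral {min 0 a..max 0 a} (K' s0)) (at s0 within U)"
    using leibniz_rule_field_derivative[of U "min 0 a" "max 0 a" K K' s0] U K K'_cont K_cont
    unfolding I by (auto intro: has_field_derivative_at_within integrable_continuous_interval)
  then have D: "((\<lambda>s. integral {min 0 a..max 0 a} (K s)) has_real_derivative
      integral {min 0 a..max 0 a} (K' s0)) (at s0)"
    by (simp add: at_within_open[OF U(1,2)])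
  show ?thesis
    using D DERIV_minus[OF D] by (cases "0 \<le> a") (simp_all add: oint_def)
qed

section \<open>Symmetry of mixed partial derivatives in the plane\<close>

lemma continuous_at_pair_imp_square_bound:
  fixes g :: "real \<Rightarrow> real \<Rightarrow> real"
  assumes "continuous (at (a, b)) (\<lambda>p. g (fst p) (snd p))" and "e > 0"
  obtains d where "d > 0" "\<And>s t. \<bar>s - a\<bar> < d \<Longrightarrow> \<bar>t - b\<bar> < d \<Longrightarrow> \<bar>g s t - g a b\<bar> < e"
proof -
  obtain d0 where d0: "d0 > 0" "\<And>p. dist p (a, b) < d0 \<Longrightarrow> dist (g (fst p) (snd p)) (g a b) < e"
    using assms unfolding continuous_at_eps_delta by fastforce
  show ?thesis
  proof (rule that[of "d0 / 2"])
    show "d0 / 2 > 0" using d0 by simp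
    fix s t assume st: "\<bar>s - a\<bar> < d0 / 2" "\<bar>t - b\<bar> < d0 / 2"
    have "dist (s, t) (a, b) = sqrt ((s - a)\<^sup>2 + (t - b)\<^sup>2)"
      by (simp add: dist_Pair_Pair dist_real_def)
    also have "\<dots> \<le> \<bar>s - a\<bar> + \<bar>t - b\<bar>" by (rule sqrt_sum_squares_le_sum_abs)
    also have "\<dots> < d0" using st by simp
    finally show "\<bar>g s t - g a b\<bar> < e" using d0(2)[of "(s, t)"] by (simp add: dist_real_def)
  qed
qed

locale mixed_partials_2d =
  fixes f f1 f2 f12 f21 :: "real \<Rightarrow> real \<Rightarrow> real" and a b \<delta> :: real
  assumes d1: "\<And>s t. \<bar>s - a\<bar> < \<delta> \<Longrightarrow> \<bar>t - b\<bar> < \<delta> \<Longrightarrow> ((\<lambda>s. f s t) has_real_derivative f1 s t) (at s)"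
    and d2: "\<And>s t. \<bar>s - a\<bar> < \<delta> \<Longrightarrow> \<bar>t - b\<bar> < \<delta> \<Longrightarrow> ((\<lambda>t. f s t) has_real_derivative f2 s t) (at t)"
    and d12: "\<And>s t. \<bar>s - a\<bar> < \<delta> \<Longrightarrow> \<bar>t - b\<bar> < \<delta> \<Longrightarrow> ((\<lambda>t. f1 s t) has_real_derivative f12 s t) (at t)"
    and d21: "\<And>s t. \<bar>s - a\<bar> < \<delta> \<Longrightarrow> \<bar>t - b\<bar> < \<delta> \<Longrightarrow> ((\<lambda>s. f2 s t) has_real_derivative f21 s t) (at s)"
begin

text \<open>Both iterated mean value theorems evaluate the same second difference
  \<open>f (a+h) (b+h) - f (a+h) b - f a (b+h) + f a b\<close>, once as \<open>h\<^sup>2 f12\<close> and once as \<open>h\<^sup>2 f21\<close>.\<close>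

lemma second_difference_mvt:
  assumes h: "0 < h" "h < \<delta>"
  obtains \<xi> \<eta> \<xi>' \<eta>' where "\<xi> \<in> {a<..<a + h}" "\<eta> \<in> {b<..<b + h}" "\<xi>' \<in> {a<..<a + h}" "\<eta>' \<in> {b<..<b + h}"
    "f12 \<xi> \<eta> = f21 \<xi>' \<eta>'"
proof -
  have mvt: "\<exists>z. c < z \<and> z < c + h \<and> g (c + h) - g c = h * g' z"
    if "\<And>x. c \<le> x \<Longrightarrow> x \<le> c + h \<Longrightarrow> (g has_real_derivative g' x) (at x)" for g g' c
    using MVT2[of c "c + h" g g'] that h by simp
  obtain \<xi> where \<xi>: "a < \<xi>" "\<xi> < a + h"
    and A1: "(f (a + h) (b + h) - f (a + h) b) - (f a (b + h) - f a b) = h * (f1 \<xi> (b + h) - f1 \<xi> b)"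
    using mvt[of a "\<lambda>s. f s (b + h) - f s b" "\<lambda>s. f1 s (b + h) - f1 s b"] h by (force intro!: DERIV_diff d1)
  obtain \<eta> where \<eta>: "b < \<eta>" "\<eta> < b + h" and B1: "f1 \<xi> (b + h) - f1 \<xi> b = h * f12 \<xi> \<eta>"
    using mvt[of b "f1 \<xi>" "f12 \<xi>"] h \<xi> by (force intro!: d12)
  obtain \<eta>' where \<eta>': "b < \<eta>'" "\<eta>' < b + h"
    and A2: "(f (a + h) (b + h) - f a (b + h)) - (f (a + h) b - f a b) = h * (f2 (a + h) \<eta>' - f2 a \<eta>')"
    using mvt[of b "\<lambda>t. f (a + h) t - f a t" "\<lambda>t. f2 (a + h) t - f2 a t"] h by (force intro!: DERIV_diff d2)
  obtain \<xi>' where \<xi>': "a < \<xi>'" "\<xi>' < a + h" and B2: "f2 (a + h) \<eta>' - f2 a \<eta>' = h * f21 \<xi>' \<eta>'"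
    using mvt[of a "\<lambda>s. f2 s \<eta>'" "\<lambda>s. f21 s \<eta>'"] h \<eta>' by (force intro!: d21)
  have "h * (h * f12 \<xi> \<eta>) = h * (h * f21 \<xi>' \<eta>')"
    using A1 B1 A2 B2 by (simp add: algebra_simps)
  then show ?thesis using that[of \<xi> \<eta> \<xi>' \<eta>'] \<xi> \<eta> \<xi>' \<eta>' h by simp
qed

lemma mixed_partials_eq:
  assumes "\<delta> > 0"
    and c12: "continuous (at (a, b)) (\<lambda>p. f12 (fst p) (snd p))"
    and c21: "continuous (at (a, b)) (\<lambda>p. f21 (fst p) (snd p))"
  shows "f12 a b = f21 a b"
proof -
  have close: "\<bar>f12 a b - f21 a b\<bar> < 2 * e" if e: "e > 0" for e
  proof -
    obtain e1 where e1: "e1 > 0" "\<And>s t. \<bar>s - a\<bar> < e1 \<Longrightarrow> \<bar>t - b\<bar> < e1 \<Longrightarrow> \<bar>f12 s t - f12 a b\<bar> < e"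
      using continuous_at_pair_imp_square_bound[OF c12 e] by blast
    obtain e2 where e2: "e2 > 0" "\<And>s t. \<bar>s - a\<bar> < e2 \<Longrightarrow> \<bar>t - b\<bar> < e2 \<Longrightarrow> \<bar>f21 s t - f21 a b\<bar> < e"
      using continuous_at_pair_imp_square_bound[OF c21 e] by blast
    define h where "h = min \<delta> (min e1 e2) / 2"
    have h: "h > 0" "h < \<delta>" "h < e1" "h < e2" using \<open>\<delta> > 0\<close> e1 e2 by (auto simp: h_def)
    obtain \<xi> \<eta> \<xi>' \<eta>' where "\<xi> \<in> {a<..<a + h}" "\<eta> \<in> {b<..<b + h}" "\<xi>' \<in> {a<..<a + h}"
      "\<eta>' \<in> {b<..<b + h}" "f12 \<xi> \<eta> = f21 \<xi>' \<eta>'"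
      using second_difference_mvt[OF h(1,2)] by blast
    with e1(2)[of \<xi> \<eta>] e2(2)[of \<xi>' \<eta>'] h show ?thesis by auto
  qed
  show ?thesis
    using close[of "\<bar>f12 a b - f21 a b\<bar> / 2"] by (cases "f12 a b = f21 a b") auto
qed

end

section \<open>Quadratic forms and the least eigenvalue\<close>

definition quad_form :: "nat \<Rightarrow> (nat \<Rightarrow> nat \<Rightarrow> real) \<Rightarrow> (nat \<Rightarrow> real) \<Rightarrow> real" where
  "quad_form d A v = (\<Sum>i<d. \<Sum>j<d. v i * A i j * v j)"

definition sqnorm :: "nat \<Rightarrow> (nat \<Rightarrow> real) \<Rightarrow> real" where
  "sqnorm d v = (\<Sum>i<d. (v i)\<^sup>2)"

lemma posdef_iff_quad_form:
  "posdef d A \<longleftrightarrow> (\<forall>i<d. \<forall>j<d. A i j = A j i) \<and> (\<forall>v. (\<exists>i<d. v i \<noteq> 0) \<longrightarrow> quad_form d A v > 0)"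
  unfolding posdef_def quad_form_def ..

lemma sqnorm_nonneg: "sqnorm d v \<ge> 0"
  unfolding sqnorm_def by (intro sum_nonneg) auto

lemma sqnorm_eq_0_iff: "sqnorm d v = 0 \<longleftrightarrow> (\<forall>i<d. v i = 0)"
  unfolding sqnorm_def by (subst sum_nonneg_eq_0_iff) auto

lemma sqnorm_pos_iff: "sqnorm d v > 0 \<longleftrightarrow> (\<exists>i<d. v i \<noteq> 0)"
  using sqnorm_nonneg[of d v] sqnorm_eq_0_iff[of d v] by auto

lemma quad_form_cong: "(\<And>i. i < d \<Longrightarrow> v i = w i) \<Longrightarrow> quad_form d A v = quad_form d A w"
  unfolding quad_form_def by simp

lemma sqnorm_cong: "(\<And>i. i < d \<Longrightarrow> v i = w i) \<Longrightarrow> sqnorm d v = sqnorm d w"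
  unfolding sqnorm_def by simp

lemma quad_form_scale: "quad_form d A (\<lambda>i. s * v i) = s\<^sup>2 * quad_form d A v"
  unfolding quad_form_def power2_eq_square by (simp add: sum_distrib_left algebra_simps)

lemma sqnorm_scale: "sqnorm d (\<lambda>i. s * v i) = s\<^sup>2 * sqnorm d v"
  unfolding sqnorm_def by (simp add: sum_distrib_left power_mult_distrib)

lemma continuous_on_sqnorm: "continuous_on S (sqnorm d)"
  unfolding sqnorm_def
  by (intro continuous_intros continuous_on_subset[OF continuous_on_product_coordinates]) auto

lemma continuous_on_quad_form: "continuous_on S (quad_form d A)"
  unfolding quad_form_def
  by (intro continuous_intros continuous_on_subset[OF continuous_on_product_coordinates]) auto

lemma quad_form_eigenvector:
  assumes "\<forall>i<d. (\<Sum>j<d. A i j * v j) = l * v i"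
  shows "quad_form d A v = l * sqnorm d v"
proof -
  have "quad_form d A v = (\<Sum>i<d. v i * (\<Sum>j<d. A i j * v j))"
    unfolding quad_form_def by (intro sum.cong) (auto simp: sum_distrib_left algebra_simps)
  also have "\<dots> = (\<Sum>i<d. l * (v i)\<^sup>2)" using assms by (intro sum.cong) (auto simp: power2_eq_square)
  finally show ?thesis by (simp add: sqnorm_def sum_distrib_left)
qed

lemma quad_form_add_unit:
  assumes sym: "\<forall>i<d. \<forall>j<d. A i j = A j i" and i: "i < d"
  shows "quad_form d A (\<lambda>k. v k + t * (if k = i then 1 else 0))
    = quad_form d A v + 2 * t * (\<Sum>j<d. A i j * v j) + t\<^sup>2 * A i i"
proof -
  define e :: "nat \<Rightarrow> real" where "e = (\<lambda>k. if k = i then 1 else 0)"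
  have unit: "(\<Sum>a<d. e a * g a) = g i" "(\<Sum>a<d. g a * e a) = g i" for g :: "nat \<Rightarrow> real"
    using i by (simp_all add: e_def if_distrib[of "\<lambda>x. x * g _"] if_distrib[of "\<lambda>x. g _ * x"]
        sum.delta cong: if_cong)
  have "quad_form d A (\<lambda>k. v k + t * e k) = quad_form d A v + t * (\<Sum>a<d. \<Sum>b<d. e a * A a b * v b)
      + t * (\<Sum>a<d. \<Sum>b<d. v a * A a b * e b) + t\<^sup>2 * (\<Sum>a<d. \<Sum>b<d. e a * A a b * e b)"
    unfolding quad_form_def by (simp add: algebra_simps sum.distrib sum_distrib_left power2_eq_square)
  moreover have "(\<Sum>a<d. \<Sum>b<d. e a * A a b * v b) = (\<Sum>j<d. A i j * v j)"
    using unit(1)[of "\<lambda>a. \<Sum>b<d. A a b * v b"] by (simp add: sum_distrib_left mult.assoc)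
  moreover have "(\<Sum>a<d. \<Sum>b<d. v a * A a b * e b) = (\<Sum>j<d. A i j * v j)"
    using unit(2) sym i by (intro sum.cong) auto
  moreover have "(\<Sum>a<d. \<Sum>b<d. e a * A a b * e b) = A i i"
    using unit(1)[of "\<lambda>a. \<Sum>b<d. A a b * e b"] unit(2)[of "A i"] by (simp add: sum_distrib_left mult.assoc)
  ultimately show ?thesis by (simp add: e_def)
qed

lemma sqnorm_add_unit:
  assumes "i < d"
  shows "sqnorm d (\<lambda>k. v k + t * (if k = i then 1 else 0)) = sqnorm d v + 2 * t * v i + t\<^sup>2"
proof -
  have "sqnorm d (\<lambda>k. v k + t * (if k = i then 1 else 0))
      = (\<Sum>k<d. (v k)\<^sup>2 + (if k = i then 2 * t * v k + t\<^sup>2 else 0))"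
    unfolding sqnorm_def by (intro sum.cong) (auto simp: power2_eq_square algebra_simps)
  then show ?thesis using assms by (simp add: sum.distrib sqnorm_def sum.delta)
qed

lemma nonneg_quadratic_imp_linear_coeff_zero:
  fixes \<beta> \<gamma> :: real
  assumes "\<And>t. 0 \<le> 2 * t * \<beta> + t\<^sup>2 * \<gamma>"
  shows "\<beta> = 0"
proof (rule ccontr)
  assume "\<beta> \<noteq> 0"
  define k where "k = \<bar>\<gamma>\<bar> + 1"
  have k: "k > 0" "2 - \<gamma> / k > 0" by (auto simp: k_def divide_less_eq)
  have "2 * (- \<beta> / k) * \<beta> + (- \<beta> / k)\<^sup>2 * \<gamma> = - ((\<beta>\<^sup>2 / k) * (2 - \<gamma> / k))"
    using k by (simp add: field_simps power2_eq_square)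
  also have "\<dots> < 0" using \<open>\<beta> \<noteq> 0\<close> k by simp
  finally show False using assms[of "- \<beta> / k"] by simp
qed

lemma finite_eigenvalues: "finite (eigenvalues d A)"
proof -
  define M where "M = mat d d (\<lambda>(i, j). A i j)"
  have M: "M \<in> carrier_mat d d" by (simp add: M_def)
  have "eigenvalues d A \<subseteq> {k. poly (char_poly M) k = 0}"
  proof
    fix l assume "l \<in> eigenvalues d A"
    then obtain v where v: "\<exists>i<d. v i \<noteq> 0" "\<forall>i<d. (\<Sum>j<d. A i j * v j) = l * v i"
      unfolding eigenvalues_def by blast
    have "eigenvector M (vec d v) l"
      unfolding eigenvector_def
    proof (intro conjI)
      show "vec d v \<in> carrier_vec (dim_row M)" by (simp add: M_def)
      show "vec d v \<noteq> 0\<^sub>v (dim_row M)"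
        using v(1) by (metis M_def dim_row_mat(1) index_vec index_zero_vec(1))
      show "M *\<^sub>v vec d v = l \<cdot>\<^sub>v vec d v"
      proof (rule eq_vecI)
        fix i assume "i < dim_vec (l \<cdot>\<^sub>v vec d v)"
        then have i: "i < d" by simp
        have "(M *\<^sub>v vec d v) $ i = (\<Sum>j\<in>{0..<d}. A i j * v j)"
          using i by (simp add: M_def scalar_prod_def)
        then show "(M *\<^sub>v vec d v) $ i = (l \<cdot>\<^sub>v vec d v) $ i"
          using v(2) i by (simp add: atLeast0LessThan)
      qed (simp add: M_def)
    qed
    then show "l \<in> {k. poly (char_poly M) k = 0}"
      using eigenvalue_root_char_poly[OF M] unfolding eigenvalue_def by blast
  qed
  moreover have "char_poly M \<noteq> 0" using degree_monic_char_poly[OF M] by auto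
  ultimately show ?thesis using poly_roots_finite finite_subset by blast
qed

lemma quad_form_ge_of_unit_sphere:
  assumes "\<And>y. sqnorm d y = 1 \<Longrightarrow> (\<forall>i\<ge>d. y i = 0) \<Longrightarrow> c \<le> quad_form d A y"
  shows "c * sqnorm d x \<le> quad_form d A x"
proof (cases "sqnorm d x > 0")
  case False
  then have "\<forall>i<d. x i = 0" using sqnorm_pos_iff by blast
  then show ?thesis using False sqnorm_nonneg[of d x] by (simp add: quad_form_def)
next
  case pos: True
  define s where "s = 1 / sqrt (sqnorm d x)"
  define y where "y = (\<lambda>i. if i < d then s * x i else 0)"
  have s2: "s\<^sup>2 = 1 / sqnorm d x" using pos by (simp add: s_def power_divide)
  have "sqnorm d y = sqnorm d (\<lambda>i. s * x i)" by (rule sqnorm_cong) (simp add: y_def)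
  also have "\<dots> = 1" using s2 pos by (simp add: sqnorm_scale)
  finally have "c \<le> quad_form d A y" by (intro assms) (auto simp: y_def)
  also have "quad_form d A y = quad_form d A (\<lambda>i. s * x i)" by (rule quad_form_cong) (simp add: y_def)
  also have "\<dots> = quad_form d A x / sqnorm d x" using s2 by (simp add: quad_form_scale)
  finally show ?thesis using pos by (simp add: le_divide_eq mult.commute)
qed

text \<open>A minimiser of the quadratic form on the unit sphere is an eigenvector, because the
  form is stationary there in every coordinate direction.\<close>

lemma unit_sphere_minimiser_eigenvector:
  assumes sym: "\<forall>i<d. \<forall>j<d. A i j = A j i" and i: "i < d" and v: "sqnorm d v = 1"
    and min: "\<forall>x. quad_form d A v * sqnorm d x \<le> quad_form d A x"
  shows "(\<Sum>j<d. A i j * v j) = quad_form d A v * v i"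
proof -
  define c where "c = quad_form d A v"
  have "(\<Sum>j<d. A i j * v j) - c * v i = 0"
  proof (rule nonneg_quadratic_imp_linear_coeff_zero)
    fix t
    have "c * sqnorm d (\<lambda>k. v k + t * (if k = i then 1 else 0))
        \<le> quad_form d A (\<lambda>k. v k + t * (if k = i then 1 else 0))"
      using min by (simp add: c_def)
    then have "c * (1 + 2 * t * v i + t\<^sup>2) \<le> c + 2 * t * (\<Sum>j<d. A i j * v j) + t\<^sup>2 * A i i"
      unfolding quad_form_add_unit[OF sym i] sqnorm_add_unit[OF i] v c_def .
    then show "0 \<le> 2 * t * ((\<Sum>j<d. A i j * v j) - c * v i) + t\<^sup>2 * (A i i - c)"
      by (simp add: algebra_simps)
  qed
  then show ?thesis by (simp add: c_def)
qed

lemma min_eigenpair_exists: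
  assumes d: "0 < d" and sym: "\<forall>i<d. \<forall>j<d. A i j = A j i"
  obtains c v where "sqnorm d v = 1" "\<forall>i<d. (\<Sum>j<d. A i j * v j) = c * v i"
    "\<forall>x. c * sqnorm d x \<le> quad_form d A x"
proof -
  define P where "P = PiE UNIV (\<lambda>i. if i < d then {-1..1} else {0::real})"
  define S where "S = P \<inter> {v. sqnorm d v = 1}"
  have "compactin (product_topology (\<lambda>i. euclidean) UNIV) P"
    unfolding P_def by (subst compactin_PiE) auto
  then have "compact P" by (simp add: euclidean_product_topology)
  then have "compact S"
    unfolding S_def by (intro compact_Int_closed closed_Collect_eq continuous_on_sqnorm continuous_on_const)
  define e0 :: "nat \<Rightarrow> real" where "e0 = (\<lambda>i. if i = 0 then 1 else 0)"
  have "sqnorm d e0 = (\<Sum>i<d. if i = 0 then 1 else 0)"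
    unfolding sqnorm_def by (intro sum.cong) (auto simp: e0_def)
  then have "e0 \<in> S" using d by (auto simp: S_def P_def e0_def)
  then obtain v where v: "v \<in> S" and vmin: "\<And>y. y \<in> S \<Longrightarrow> quad_form d A v \<le> quad_form d A y"
    using continuous_attains_inf[OF \<open>compact S\<close> _ continuous_on_quad_form] by blast
  have nv: "sqnorm d v = 1" using v by (simp add: S_def)
  have inS: "y \<in> S" if ny: "sqnorm d y = 1" and y0: "\<forall>i\<ge>d. y i = 0" for y
  proof -
    have "y i \<in> {-1..1}" if "i < d" for i
    proof -
      have "(y i)\<^sup>2 \<le> sqnorm d y" unfolding sqnorm_def by (rule member_le_sum) (use that in auto)
      then show ?thesis using ny abs_square_le_1[of "y i"] by (simp add: abs_le_iff)
    qed
    then show ?thesis using ny y0 unfolding S_def P_def by (auto simp: not_less)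
  qed
  have bound: "\<forall>x. quad_form d A v * sqnorm d x \<le> quad_form d A x"
    using vmin[OF inS] by (simp add: quad_form_ge_of_unit_sphere)
  show ?thesis
    by (rule that[OF nv]) (use unit_sphere_minimiser_eigenvector[OF sym _ nv bound] bound in auto)
qed

lemma lambda_min_is_min_eigenpair:
  assumes "0 < d" "\<forall>i<d. \<forall>j<d. A i j = A j i"
  obtains v where "sqnorm d v = 1" "\<forall>i<d. (\<Sum>j<d. A i j * v j) = lambda_min d A * v i"
    "\<forall>x. lambda_min d A * sqnorm d x \<le> quad_form d A x"
proof -
  obtain c v where nv: "sqnorm d v = 1" and ev: "\<forall>i<d. (\<Sum>j<d. A i j * v j) = c * v i"
    and bound: "\<forall>x. c * sqnorm d x \<le> quad_form d A x"
    by (rule min_eigenpair_exists[OF assms])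
  have "\<exists>i<d. v i \<noteq> 0" using nv sqnorm_pos_iff[of d v] by simp
  then have "c \<in> eigenvalues d A" unfolding eigenvalues_def using ev by blast
  moreover have "c \<le> l" if l: "l \<in> eigenvalues d A" for l
  proof -
    obtain z where "\<exists>i<d. z i \<noteq> 0" and z: "\<forall>i<d. (\<Sum>j<d. A i j * z j) = l * z i"
      using l unfolding eigenvalues_def by blast
    then have "sqnorm d z > 0" using sqnorm_pos_iff by blast
    moreover have "c * sqnorm d z \<le> l * sqnorm d z"
      using bound quad_form_eigenvector[OF z] by metis
    ultimately show ?thesis by simp
  qed
  ultimately have "lambda_min d A = c"
    unfolding lambda_min_def by (intro Min_eqI finite_eigenvalues)
  then show ?thesis using that nv ev bound by blast
qed

lemma lambda_min_pos:
  assumes "0 < d" "posdef d A"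
  shows "lambda_min d A > 0"
proof -
  have "\<forall>i<d. \<forall>j<d. A i j = A j i" using assms(2) unfolding posdef_def by blast
  then obtain v where nv: "sqnorm d v = 1" and ev: "\<forall>i<d. (\<Sum>j<d. A i j * v j) = lambda_min d A * v i"
    using lambda_min_is_min_eigenpair[OF assms(1)] by blast
  have "quad_form d A v > 0"
    using assms(2) nv sqnorm_pos_iff[of d v] unfolding posdef_iff_quad_form by auto
  then show ?thesis using quad_form_eigenvector[OF ev] nv by simp
qed

lemma sum_lessThan_add_split:
  "(\<Sum>i<(N::nat) + m. f i) = (\<Sum>i<N. f i) + (\<Sum>a<m. f (N + a) :: 'a::comm_monoid_add)"
  by (induction m) (auto simp: ac_simps)

lemma posdef_leading_block:
  assumes "posdef n A" "d \<le> n"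
  shows "posdef d A"
  unfolding posdef_iff_quad_form
proof (intro conjI allI impI)
  fix i j assume "i < d" "j < d"
  then show "A i j = A j i" using assms unfolding posdef_def by auto
next
  fix v :: "nat \<Rightarrow> real" assume "\<exists>i<d. v i \<noteq> 0"
  define v' where "v' = (\<lambda>i. if i < d then v i else 0)"
  have "\<exists>i<n. v' i \<noteq> 0" using \<open>\<exists>i<d. v i \<noteq> 0\<close> assms(2) by (auto simp: v'_def)
  then have "quad_form n A v' > 0" using assms(1) unfolding posdef_iff_quad_form by blast
  moreover obtain k where "n = d + k" using assms(2) le_Suc_ex by blast
  then have "quad_form n A v' = quad_form d A v"
    by (simp add: quad_form_def v'_def sum_lessThan_add_split)
  ultimately show "quad_form d A v > 0" by simp
qed

lemma quad_form_block_split: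
  assumes sym: "\<forall>i<N + m. \<forall>j<N + m. H i j = H j i"
  shows "quad_form (N + m) H v = quad_form N H v
    + 2 * (\<Sum>a<m. \<Sum>\<nu><N. v (N + a) * H (N + a) \<nu> * v \<nu>)
    + quad_form m (\<lambda>a b. H (N + a) (N + b)) (\<lambda>a. v (N + a))"
proof -
  have "(\<Sum>i<N. \<Sum>b<m. v i * H i (N + b) * v (N + b)) = (\<Sum>b<m. \<Sum>i<N. v (N + b) * H (N + b) i * v i)"
    using sym by (subst sum.swap) (auto intro!: sum.cong)
  then show ?thesis
    unfolding quad_form_def sum_lessThan_add_split by (simp add: sum.distrib)
qed

lemma bilinear_Cauchy_Schwarz:
  fixes y x :: "nat \<Rightarrow> real" and c :: "nat \<Rightarrow> nat \<Rightarrow> real"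
  shows "(\<Sum>a\<in>A. \<Sum>\<nu>\<in>V. y a * c a \<nu> * x \<nu>)\<^sup>2
    \<le> (\<Sum>\<nu>\<in>V. \<Sum>a\<in>A. (c a \<nu>)\<^sup>2) * (\<Sum>\<nu>\<in>V. (x \<nu>)\<^sup>2) * (\<Sum>a\<in>A. (y a)\<^sup>2)"
proof -
  have pairs: "(\<Sum>p\<in>A \<times> V. f (fst p) (snd p)) = (\<Sum>a\<in>A. \<Sum>\<nu>\<in>V. (f a \<nu> :: real))" for f
    by (subst sum.cartesian_product) (simp add: case_prod_beta)
  have "(\<Sum>p\<in>A \<times> V. c (fst p) (snd p) * (y (fst p) * x (snd p)))\<^sup>2
      \<le> (\<Sum>p\<in>A \<times> V. (c (fst p) (snd p))\<^sup>2) * (\<Sum>p\<in>A \<times> V. (y (fst p) * x (snd p))\<^sup>2)"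
    by (rule Cauchy_Schwarz_ineq_sum)
  moreover have "(\<Sum>p\<in>A \<times> V. c (fst p) (snd p) * (y (fst p) * x (snd p)))
      = (\<Sum>a\<in>A. \<Sum>\<nu>\<in>V. y a * c a \<nu> * x \<nu>)"
    by (subst pairs[where f = "\<lambda>a \<nu>. c a \<nu> * (y a * x \<nu>)"]) (simp add: algebra_simps)
  moreover have "(\<Sum>p\<in>A \<times> V. (c (fst p) (snd p))\<^sup>2) = (\<Sum>\<nu>\<in>V. \<Sum>a\<in>A. (c a \<nu>)\<^sup>2)"
    by (subst pairs[where f = "\<lambda>a \<nu>. (c a \<nu>)\<^sup>2"]) (rule sum.swap)
  moreover have "(\<Sum>p\<in>A \<times> V. (y (fst p) * x (snd p))\<^sup>2) = (\<Sum>a\<in>A. (y a)\<^sup>2) * (\<Sum>\<nu>\<in>V. (x \<nu>)\<^sup>2)"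
    by (subst pairs[where f = "\<lambda>a \<nu>. (y a * x \<nu>)\<^sup>2"]) (simp add: sum_product power_mult_distrib)
  ultimately show ?thesis by (simp add: ac_simps)
qed

text \<open>Positivity of \<open>l X + 2 T + w Y\<close> by AM-GM: \<open>4 S X Y < 4 w l X Y \<le> (l X + w Y)\<^sup>2\<close>.\<close>

lemma quadratic_form_2x2_pos:
  fixes l w S X Y T :: real
  assumes l: "l > 0" and wl: "w * l > S" and S: "S \<ge> 0" and X: "X \<ge> 0" and Y: "Y \<ge> 0"
    and XY: "X + Y > 0" and T: "T\<^sup>2 \<le> S * X * Y"
  shows "l * X + 2 * T + w * Y > 0"
proof -
  have "w * l > 0" using wl S by linarith
  then have w: "w > 0" using l by (simp add: zero_less_mult_iff)
  show ?thesis
  proof (cases "X = 0 \<or> Y = 0")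
    case True
    then have "T = 0" using T by auto
    then show ?thesis using True XY l w X Y by (auto simp: add_pos_pos)
  next
    case False
    then have "X * Y > 0" using X Y by simp
    then have "S * (X * Y) < w * l * (X * Y)" using wl by (rule mult_strict_right_mono[rotated])
    then have "S * X * Y < w * l * X * Y" by (simp add: mult.assoc)
    also have "\<dots> \<le> (l * X + w * Y)\<^sup>2 / 4"
      using zero_le_power2[of "l * X - w * Y"] by (simp add: power2_eq_square algebra_simps)
    finally have "4 * T\<^sup>2 < (l * X + w * Y)\<^sup>2" using T by linarith
    moreover have "(-2 * T)\<^sup>2 = 4 * T\<^sup>2" by (simp add: power2_eq_square)
    ultimately have "(-2 * T)\<^sup>2 < (l * X + w * Y)\<^sup>2" by linarith
    moreover have "0 \<le> l * X + w * Y" using l w X Y by simp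
    ultimately have "-2 * T < l * X + w * Y" by (rule power2_less_imp_less)
    then show ?thesis by linarith
  qed
qed

lemma posdef_block_scalar_tail:
  fixes H M :: "nat \<Rightarrow> nat \<Rightarrow> real"
  assumes N: "0 < N" and M: "posdef N M"
    and sym: "\<forall>i<N + m. \<forall>j<N + m. H i j = H j i"
    and head: "\<forall>i<N. \<forall>j<N. H i j = M i j"
    and tail: "\<forall>a<m. \<forall>b<m. H (N + a) (N + b) = (if a = b then w else 0)"
    and w: "w * lambda_min N M > (\<Sum>\<nu><N. \<Sum>a<m. (H (N + a) \<nu>)\<^sup>2)"
  shows "posdef (N + m) H"
  unfolding posdef_iff_quad_form
proof (intro conjI allI impI)
  fix i j assume "i < N + m" "j < N + m" then show "H i j = H j i" using sym by blast
next
  fix v :: "nat \<Rightarrow> real" assume v: "\<exists>i<N + m. v i \<noteq> 0"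
  define y where "y = (\<lambda>a. v (N + a))"
  define T where "T = (\<Sum>a<m. \<Sum>\<nu><N. y a * H (N + a) \<nu> * v \<nu>)"
  have "quad_form m (\<lambda>a b. H (N + a) (N + b)) y = (\<Sum>a<m. w * (y a)\<^sup>2)"
    using tail unfolding quad_form_def
    by (intro sum.cong) (auto simp: if_distrib[of "\<lambda>z. _ * z * _"] power2_eq_square sum.delta cong: if_cong)
  then have split: "quad_form (N + m) H v = quad_form N M v + 2 * T + w * sqnorm m y"
    using quad_form_block_split[OF sym, of v] head
    by (simp add: T_def y_def sqnorm_def sum_distrib_left quad_form_def)
  have CS: "T\<^sup>2 \<le> (\<Sum>\<nu><N. \<Sum>a<m. (H (N + a) \<nu>)\<^sup>2) * sqnorm N v * sqnorm m y"
    unfolding T_def sqnorm_def by (rule bilinear_Cauchy_Schwarz)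
  have XY: "sqnorm N v + sqnorm m y > 0"
    using v sqnorm_pos_iff[of "N + m" v] by (simp add: sqnorm_def y_def sum_lessThan_add_split)
  have "0 \<le> (\<Sum>\<nu><N. \<Sum>a<m. (H (N + a) \<nu>)\<^sup>2)" by (intro sum_nonneg) auto
  then have "lambda_min N M * sqnorm N v + 2 * T + w * sqnorm m y > 0"
    by (rule quadratic_form_2x2_pos[OF lambda_min_pos[OF N M] w _ sqnorm_nonneg sqnorm_nonneg XY CS])
  moreover have "lambda_min N M * sqnorm N v \<le> quad_form N M v"
    using lambda_min_is_min_eigenpair[of N M] N M unfolding posdef_def by metis
  ultimately show "quad_form (N + m) H v > 0" unfolding split by linarith
qed

section \<open>Calculus on a coordinate box\<close>

lemma iter_pd_append: "iter_pd (is @ [i]) f = iter_pd is (pd i f)"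
  by (induction "is") auto

lemma continuous_on_fun_upd: "continuous_on S (\<lambda>t::real. x(\<mu> := t))"
proof (intro continuous_on_coordinatewise_then_product)
  fix i show "continuous_on S (\<lambda>t. (x(\<mu> := t)) i)"
    by (cases "i = \<mu>") (auto intro: continuous_on_id)
qed

lemma continuous_on_fun_upd2: "continuous_on S (\<lambda>p::real \<times> real. x(j := fst p, \<mu> := snd p))"
proof (intro continuous_on_coordinatewise_then_product)
  fix i show "continuous_on S (\<lambda>p::real \<times> real. (x(j := fst p, \<mu> := snd p)) i)"
    by (cases "i = \<mu>"; cases "i = j") (auto intro: continuous_on_fst continuous_on_snd continuous_on_id)
qed

lemma continuous_on_scale_coordinate: "continuous_on S (\<lambda>p::pt \<times> real. (fst p)(\<mu> := fst p \<mu> * snd p))"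
proof (intro continuous_on_coordinatewise_then_product)
  have coord: "continuous_on S (\<lambda>p::pt \<times> real. fst p i)" for i
    by (rule continuous_on_compose2[OF continuous_on_product_coordinates continuous_on_fst]) auto
  fix i show "continuous_on S (\<lambda>p::pt \<times> real. ((fst p)(\<mu> := fst p \<mu> * snd p)) i)"
    by (cases "i = \<mu>") (auto intro!: continuous_on_mult coord continuous_on_snd)
qed

definition zero_below :: "nat \<Rightarrow> pt \<Rightarrow> pt" where
  "zero_below \<mu> x = (\<lambda>i. if i < \<mu> then 0 else x i)"

definition axis_integral :: "nat \<Rightarrow> (pt \<Rightarrow> real) \<Rightarrow> pt \<Rightarrow> real" where
  "axis_integral \<mu> H x = oint 0 (x \<mu>) (\<lambda>t. H (x(\<mu> := t)))"

lemma zero_below_0 [simp]: "zero_below 0 x = x"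
  unfolding zero_below_def by simp

lemma zero_below_upd_Suc: "zero_below \<mu> (x(\<mu> := 0)) = zero_below (Suc \<mu>) x"
  unfolding zero_below_def by (rule ext) auto

lemma zero_below_upd_low: "i < \<mu> \<Longrightarrow> zero_below \<mu> (x(i := t)) = zero_below \<mu> x"
  unfolding zero_below_def by auto

lemma zero_below_upd_high: "\<not> i < \<mu> \<Longrightarrow> zero_below \<mu> (x(i := t)) = (zero_below \<mu> x)(i := t)"
  unfolding zero_below_def by auto

lemma continuous_on_zero_below: "continuous_on S (zero_below \<mu>)"
  unfolding zero_below_def
proof (intro continuous_on_coordinatewise_then_product)
  fix i show "continuous_on S (\<lambda>x. if i < \<mu> then 0 else x i)"
    by (cases "i < \<mu>") (auto intro: continuous_on_subset[OF continuous_on_product_coordinates])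
qed

lemma pd_const: "pd i (\<lambda>x. c) x = 0"
  unfolding pd_def by simp

lemma pd_coordinate: "pd i (\<lambda>x. x j) x = (if i = j then 1 else 0)"
  unfolding pd_def by (cases "i = j") auto

lemma pd_zero_below: "pd i (\<lambda>x. u (zero_below \<mu> x)) x = (if i < \<mu> then 0 else pd i u (zero_below \<mu> x))"
  by (cases "i < \<mu>") (simp_all add: pd_def zero_below_upd_low zero_below_upd_high,
      simp add: zero_below_def)

lemma axis_integral_zero: "axis_integral \<mu> (\<lambda>x. 0) x = 0"
  unfolding axis_integral_def oint_def by simp

locale coord_box =
  fixes n :: nat and r :: "nat \<Rightarrow> real"
  assumes radii_pos: "\<forall>i<n. 0 < r i"
begin

abbreviation "B \<equiv> box_n n r"

definition cont_pdiff :: "(pt \<Rightarrow> real) \<Rightarrow> bool" where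
  "cont_pdiff f \<longleftrightarrow> continuous_on B f \<and>
     (\<forall>i<n. \<forall>x\<in>B. (\<lambda>t. f (x(i := t))) differentiable (at (x i)))"

definition smooth_upto :: "nat \<Rightarrow> (pt \<Rightarrow> real) \<Rightarrow> bool" where
  "smooth_upto k f \<longleftrightarrow> (\<forall>is. set is \<subseteq> {..<n} \<longrightarrow> length is \<le> k \<longrightarrow> cont_pdiff (iter_pd is f))"

lemma smooth_on_iff_smooth_upto: "smooth_on n B f \<longleftrightarrow> (\<forall>k. smooth_upto k f)"
  unfolding smooth_on_def smooth_upto_def cont_pdiff_def by (metis le_refl)

lemma smooth_upto_mono: "smooth_upto k' f \<Longrightarrow> k \<le> k' \<Longrightarrow> smooth_upto k f"
  unfolding smooth_upto_def by auto

lemma smooth_upto_0: "smooth_upto 0 f \<longleftrightarrow> cont_pdiff f"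
  unfolding smooth_upto_def by auto

lemma smooth_upto_Suc: "smooth_upto (Suc k) f \<longleftrightarrow> cont_pdiff f \<and> (\<forall>i<n. smooth_upto k (pd i f))"
proof
  assume f: "smooth_upto (Suc k) f"
  have "smooth_upto k (pd i f)" if "i < n" for i
    unfolding smooth_upto_def
    using f[unfolded smooth_upto_def, rule_format, of "_ @ [i]"] that by (simp add: iter_pd_append)
  with f show "cont_pdiff f \<and> (\<forall>i<n. smooth_upto k (pd i f))"
    using f[unfolded smooth_upto_def, rule_format, of "[]"] by simp
next
  assume f: "cont_pdiff f \<and> (\<forall>i<n. smooth_upto k (pd i f))"
  show "smooth_upto (Suc k) f"
    unfolding smooth_upto_def
  proof (intro allI impI)
    fix "is" :: "nat list" assume "set is \<subseteq> {..<n}" "length is \<le> Suc k"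
    then show "cont_pdiff (iter_pd is f)"
      using f by (cases "is" rule: rev_cases) (auto simp: iter_pd_append smooth_upto_def)
  qed
qed

lemma in_box_coord: "x \<in> B \<Longrightarrow> i < n \<Longrightarrow> - r i < x i \<and> x i < r i"
  unfolding box_n_def by auto

lemma box_upd: "x \<in> B \<Longrightarrow> i < n \<Longrightarrow> - r i < t \<Longrightarrow> t < r i \<Longrightarrow> x(i := t) \<in> B"
  unfolding box_n_def by auto

lemma zero_in_box: "(\<lambda>_. 0) \<in> B"
  using radii_pos unfolding box_n_def by auto

lemma zero_below_in_box: "x \<in> B \<Longrightarrow> zero_below \<mu> x \<in> B"
  using radii_pos unfolding box_n_def zero_below_def by auto

lemma segment_in_box: "x \<in> B \<Longrightarrow> \<mu> < n \<Longrightarrow> t \<in> {min 0 (x \<mu>)..max 0 (x \<mu>)} \<Longrightarrow> x(\<mu> := t) \<in> B"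
  using in_box_coord[of x \<mu>] box_upd[of x \<mu> t] by auto

lemma eventually_upd_in_box: "x \<in> B \<Longrightarrow> i < n \<Longrightarrow> eventually (\<lambda>t. x(i := t) \<in> B) (nhds (x i))"
  using eventually_nhds_in_open[of "{-r i<..<r i}" "x i"] in_box_coord[of x i]
  by (auto elim!: eventually_mono intro: box_upd)

lemma pd_cong: "(\<And>y. y \<in> B \<Longrightarrow> f y = g y) \<Longrightarrow> x \<in> B \<Longrightarrow> i < n \<Longrightarrow> pd i f x = pd i g x"
  unfolding pd_def
  by (rule deriv_cong_ev[OF _ refl]) (use eventually_upd_in_box in \<open>fastforce elim: eventually_mono\<close>)

lemma iter_pd_cong:
  "set is \<subseteq> {..<n} \<Longrightarrow> (\<And>y. y \<in> B \<Longrightarrow> f y = g y) \<Longrightarrow> x \<in> B \<Longrightarrow> iter_pd is f x = iter_pd is g x"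
  by (induction "is" arbitrary: x) (auto intro!: pd_cong)

lemma cont_pdiff_has_derivative:
  "cont_pdiff f \<Longrightarrow> x \<in> B \<Longrightarrow> i < n \<Longrightarrow> ((\<lambda>t. f (x(i := t))) has_real_derivative pd i f x) (at (x i))"
  unfolding cont_pdiff_def pd_def using DERIV_deriv_iff_real_differentiable by blast

lemma cont_pdiff_cong:
  assumes "\<And>y. y \<in> B \<Longrightarrow> f y = g y" "cont_pdiff f"
  shows "cont_pdiff g"
  unfolding cont_pdiff_def
proof (intro conjI allI impI ballI)
  show "continuous_on B g" using assms continuous_on_cong unfolding cont_pdiff_def by blast
  fix i x assume i: "i < n" and x: "x \<in> B"
  have ev: "eventually (\<lambda>t. f (x(i := t)) = g (x(i := t))) (nhds (x i))"
    using eventually_upd_in_box[OF x i] by eventually_elim (use assms in auto)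
  have "((\<lambda>t. g (x(i := t))) has_real_derivative pd i f x) (at (x i))"
    using cont_pdiff_has_derivative[OF assms(2) x i] DERIV_cong_ev[OF refl ev refl] by blast
  then show "(\<lambda>t. g (x(i := t))) differentiable at (x i)"
    using real_differentiable_def by blast
qed

lemma smooth_upto_cong: "(\<And>y. y \<in> B \<Longrightarrow> f y = g y) \<Longrightarrow> smooth_upto k f \<Longrightarrow> smooth_upto k g"
  unfolding smooth_upto_def by (metis cont_pdiff_cong iter_pd_cong)

lemma cont_pdiff_const: "cont_pdiff (\<lambda>x. c)"
  unfolding cont_pdiff_def by auto

lemma cont_pdiff_add: "cont_pdiff f \<Longrightarrow> cont_pdiff g \<Longrightarrow> cont_pdiff (\<lambda>x. f x + g x)"
  unfolding cont_pdiff_def by (auto intro: continuous_on_add)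

lemma cont_pdiff_mult: "cont_pdiff f \<Longrightarrow> cont_pdiff g \<Longrightarrow> cont_pdiff (\<lambda>x. f x * g x)"
  unfolding cont_pdiff_def by (auto intro: continuous_on_mult)

lemma cont_pdiff_sum:
  "finite A \<Longrightarrow> (\<And>a. a \<in> A \<Longrightarrow> cont_pdiff (F a)) \<Longrightarrow> cont_pdiff (\<lambda>x. \<Sum>a\<in>A. F a x)"
  by (induction A rule: finite_induct) (auto intro: cont_pdiff_const cont_pdiff_add)

lemma cont_pdiff_coordinate: "cont_pdiff (\<lambda>x. x j)"
  unfolding cont_pdiff_def
proof (intro conjI allI impI ballI)
  show "continuous_on B (\<lambda>x. x j)"
    by (rule continuous_on_subset[OF continuous_on_product_coordinates]) simp
  fix i x
  show "(\<lambda>t. (x(i := t)) j) differentiable at (x i)"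
    by (cases "i = j") simp_all
qed

lemma cont_pdiff_zero_below:
  assumes "cont_pdiff u"
  shows "cont_pdiff (\<lambda>x. u (zero_below \<mu> x))"
  unfolding cont_pdiff_def
proof (intro conjI allI impI ballI)
  show "continuous_on B (\<lambda>x. u (zero_below \<mu> x))"
    using assms unfolding cont_pdiff_def
    by (intro continuous_on_compose2[OF _ continuous_on_zero_below]) (auto simp: zero_below_in_box)
  fix i x assume i: "i < n" and x: "x \<in> B"
  show "(\<lambda>t. u (zero_below \<mu> (x(i := t)))) differentiable at (x i)"
  proof (cases "i < \<mu>")
    case True then show ?thesis by (simp add: zero_below_upd_low)
  next
    case False
    have "(\<lambda>t. u ((zero_below \<mu> x)(i := t))) differentiable at (zero_below \<mu> x i)"
      using assms zero_below_in_box[OF x] i unfolding cont_pdiff_def by blast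
    then show ?thesis using False by (simp add: zero_below_upd_high) (simp add: zero_below_def)
  qed
qed

lemma pd_add:
  "cont_pdiff f \<Longrightarrow> cont_pdiff g \<Longrightarrow> x \<in> B \<Longrightarrow> i < n \<Longrightarrow> pd i (\<lambda>x. f x + g x) x = pd i f x + pd i g x"
  unfolding pd_def[of i "\<lambda>x. f x + g x"]
  by (intro DERIV_imp_deriv DERIV_add cont_pdiff_has_derivative)

lemma pd_mult:
  assumes "cont_pdiff f" "cont_pdiff g" "x \<in> B" "i < n"
  shows "pd i (\<lambda>x. f x * g x) x = pd i f x * g x + f x * pd i g x"
proof -
  have "((\<lambda>t. f (x(i := t)) * g (x(i := t))) has_real_derivative
      pd i f x * g x + f x * pd i g x) (at (x i))"
    using DERIV_mult[OF cont_pdiff_has_derivative[OF assms(1,3,4)] cont_pdiff_has_derivative[OF assms(2,3,4)]]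
    by (simp add: algebra_simps)
  then show ?thesis unfolding pd_def[of i "\<lambda>x. f x * g x"] by (rule DERIV_imp_deriv)
qed

lemma pd_sum:
  assumes "finite A" "\<And>a. a \<in> A \<Longrightarrow> cont_pdiff (F a)" "x \<in> B" "i < n"
  shows "pd i (\<lambda>x. \<Sum>a\<in>A. F a x) x = (\<Sum>a\<in>A. pd i (F a) x)"
  unfolding pd_def[of i "\<lambda>x. \<Sum>a\<in>A. F a x"]
  by (intro DERIV_imp_deriv DERIV_sum cont_pdiff_has_derivative) (use assms in auto)

lemma smooth_upto_const: "smooth_upto k (\<lambda>x. c)"
proof (induction k arbitrary: c)
  case 0 then show ?case by (simp add: smooth_upto_0 cont_pdiff_const)
next
  case (Suc k)
  have "pd i (\<lambda>x. c) = (\<lambda>x. 0)" for i by (rule ext) (simp add: pd_const)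
  then show ?case unfolding smooth_upto_Suc using Suc by (simp add: cont_pdiff_const)
qed

lemma smooth_upto_add: "smooth_upto k f \<Longrightarrow> smooth_upto k g \<Longrightarrow> smooth_upto k (\<lambda>x. f x + g x)"
proof (induction k arbitrary: f g)
  case 0 then show ?case by (simp add: smooth_upto_0 cont_pdiff_add)
next
  case (Suc k)
  then have f: "cont_pdiff f" and g: "cont_pdiff g" by (auto simp: smooth_upto_Suc)
  show ?case unfolding smooth_upto_Suc
  proof (intro conjI allI impI)
    show "cont_pdiff (\<lambda>x. f x + g x)" using f g by (rule cont_pdiff_add)
    fix i assume i: "i < n"
    have "smooth_upto k (\<lambda>x. pd i f x + pd i g x)" using Suc i by (simp add: smooth_upto_Suc)
    then show "smooth_upto k (pd i (\<lambda>x. f x + g x))"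
      by (rule smooth_upto_cong[rotated]) (simp add: pd_add[OF f g _ i])
  qed
qed

lemma smooth_upto_mult: "smooth_upto k f \<Longrightarrow> smooth_upto k g \<Longrightarrow> smooth_upto k (\<lambda>x. f x * g x)"
proof (induction k arbitrary: f g)
  case 0 then show ?case by (simp add: smooth_upto_0 cont_pdiff_mult)
next
  case (Suc k)
  then have f: "cont_pdiff f" and g: "cont_pdiff g"
    and fk: "smooth_upto k f" and gk: "smooth_upto k g"
    by (auto simp: smooth_upto_Suc[of k] intro: smooth_upto_mono[of "Suc k"])
  show ?case unfolding smooth_upto_Suc
  proof (intro conjI allI impI)
    show "cont_pdiff (\<lambda>x. f x * g x)" using f g by (rule cont_pdiff_mult)
    fix i assume i: "i < n"
    have "smooth_upto k (\<lambda>x. pd i f x * g x + f x * pd i g x)"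
      using Suc.prems i by (intro smooth_upto_add Suc.IH fk gk) (auto simp: smooth_upto_Suc)
    then show "smooth_upto k (pd i (\<lambda>x. f x * g x))"
      by (rule smooth_upto_cong[rotated]) (simp add: pd_mult[OF f g _ i])
  qed
qed

lemma smooth_upto_coordinate: "smooth_upto k (\<lambda>x. x j)"
proof (cases k)
  case 0 then show ?thesis by (simp add: smooth_upto_0 cont_pdiff_coordinate)
next
  case (Suc k')
  have "pd i (\<lambda>x. x j) = (\<lambda>x. if i = j then 1 else 0)" for i by (rule ext) (simp add: pd_coordinate)
  then show ?thesis unfolding Suc smooth_upto_Suc by (simp add: cont_pdiff_coordinate smooth_upto_const)
qed

lemma smooth_upto_zero_below: "smooth_upto k u \<Longrightarrow> smooth_upto k (\<lambda>x. u (zero_below \<mu> x))"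
proof (induction k arbitrary: u)
  case 0 then show ?case by (simp add: smooth_upto_0 cont_pdiff_zero_below)
next
  case (Suc k)
  show ?case unfolding smooth_upto_Suc
  proof (intro conjI allI impI)
    show "cont_pdiff (\<lambda>x. u (zero_below \<mu> x))"
      using Suc.prems by (simp add: smooth_upto_Suc cont_pdiff_zero_below)
    fix i assume i: "i < n"
    show "smooth_upto k (pd i (\<lambda>x. u (zero_below \<mu> x)))"
    proof (cases "i < \<mu>")
      case True
      then have "pd i (\<lambda>x. u (zero_below \<mu> x)) = (\<lambda>x. 0)" by (intro ext) (simp add: pd_zero_below)
      then show ?thesis by (simp add: smooth_upto_const)
    next
      case False
      then have "pd i (\<lambda>x. u (zero_below \<mu> x)) = (\<lambda>x. pd i u (zero_below \<mu> x))"
        by (intro ext) (simp add: pd_zero_below)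
      then show ?thesis using Suc.IH Suc.prems i by (simp add: smooth_upto_Suc)
    qed
  qed
qed

lemma continuous_on_axis_integral:
  assumes H: "continuous_on B H" and \<mu>: "\<mu> < n"
  shows "continuous_on B (axis_integral \<mu> H)"
proof -
  have e: "axis_integral \<mu> H = (\<lambda>x. x \<mu> * integral (cbox 0 1) (\<lambda>s. H (x(\<mu> := x \<mu> * s))))"
    by (rule ext) (simp add: axis_integral_def oint_stretch box_real)
  have "(\<lambda>p::pt \<times> real. (fst p)(\<mu> := fst p \<mu> * snd p)) ` (B \<times> cbox 0 1) \<subseteq> B"
  proof
    fix y assume "y \<in> (\<lambda>p::pt \<times> real. (fst p)(\<mu> := fst p \<mu> * snd p)) ` (B \<times> cbox 0 1)"
    then obtain x s where x: "x \<in> B" and s: "s \<in> {0..1}" and y: "y = x(\<mu> := x \<mu> * s)"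
      by (auto simp: box_real)
    have "\<bar>x \<mu> * s\<bar> \<le> \<bar>x \<mu>\<bar>" using s by (auto simp: abs_mult mult_left_le)
    then show "y \<in> B" using in_box_coord[OF x \<mu>] box_upd[OF x \<mu>] y by auto
  qed
  then have "continuous_on (B \<times> cbox 0 1) (\<lambda>p::pt \<times> real. H ((fst p)(\<mu> := fst p \<mu> * snd p)))"
    by (rule continuous_on_compose2[OF H continuous_on_scale_coordinate])
  then have "continuous_on B (\<lambda>x. integral (cbox 0 1) (\<lambda>s. H (x(\<mu> := x \<mu> * s))))"
    by (intro integral_continuous_on_param) (simp add: case_prod_beta)
  then show ?thesis unfolding e
    by (intro continuous_on_mult continuous_on_subset[OF continuous_on_product_coordinates]) auto
qed

lemma axis_integral_has_derivative_same:
  assumes H: "continuous_on B H" and \<mu>: "\<mu> < n" and x: "x \<in> B"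
  shows "((\<lambda>t. axis_integral \<mu> H (x(\<mu> := t))) has_real_derivative H x) (at (x \<mu>))"
proof -
  have "continuous_on {-r \<mu><..<r \<mu>} (\<lambda>t. H (x(\<mu> := t)))"
    by (rule continuous_on_compose2[OF H continuous_on_fun_upd]) (use box_upd[OF x \<mu>] in auto)
  then have "((\<lambda>b. oint 0 b (\<lambda>t. H (x(\<mu> := t)))) has_real_derivative H (x(\<mu> := x \<mu>))) (at (x \<mu>))"
    by (rule oint_has_derivative_upper) (use in_box_coord[OF x \<mu>] in auto)
  then show ?thesis by (simp add: axis_integral_def)
qed

lemma axis_integral_has_derivative_other:
  assumes H: "cont_pdiff H" and Hj: "continuous_on B (pd j H)"
    and j: "j < n" and \<mu>: "\<mu> < n" and j\<mu>: "j \<noteq> \<mu>" and x: "x \<in> B"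
  shows "((\<lambda>s. axis_integral \<mu> H (x(j := s))) has_real_derivative axis_integral \<mu> (pd j H) x) (at (x j))"
proof -
  define P where "P = (\<lambda>s t. x(j := s, \<mu> := t))"
  define U where "U = {-r j<..<r j}"
  define I where "I = {min 0 (x \<mu>)..max 0 (x \<mu>)}"
  have PB: "P s t \<in> B" if "s \<in> U" "t \<in> I" for s t
    using segment_in_box[of "x(j := s)" \<mu> t] box_upd[OF x j] that j\<mu> \<mu> by (simp add: P_def U_def I_def)
  have "((\<lambda>s. oint 0 (x \<mu>) (\<lambda>t. H (P s t))) has_real_derivative oint 0 (x \<mu>) (\<lambda>t. pd j H (P (x j) t)))
      (at (x j))"
  proof (rule oint_leibniz_rule)
    show "x j \<in> U" using in_box_coord[OF x j] by (simp add: U_def)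
    show "open U" "convex U" by (auto simp: U_def)
  next
    fix s t assume st: "s \<in> U" "t \<in> {min 0 (x \<mu>)..max 0 (x \<mu>)}"
    have "(P s t)(j := s') = P s' t" "P s t j = s" for s' using j\<mu> by (auto simp: P_def fun_upd_twist)
    then show "((\<lambda>s. H (P s t)) has_real_derivative pd j H (P s t)) (at s)"
      using cont_pdiff_has_derivative[OF H PB[OF st[unfolded I_def[symmetric]]] j] by simp
  next
    have "(\<lambda>p::real \<times> real. x(j := fst p, \<mu> := snd p)) ` (U \<times> I) \<subseteq> B" using PB by (auto simp: P_def)
    then show "continuous_on (U \<times> {min 0 (x \<mu>)..max 0 (x \<mu>)}) (\<lambda>(s, t). pd j H (P s t))"
      unfolding P_def case_prod_beta I_def[symmetric]
      by (rule continuous_on_compose2[OF Hj continuous_on_fun_upd2])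
  next
    fix s assume s: "s \<in> U"
    have img: "(\<lambda>t. x(j := s, \<mu> := t)) ` I \<subseteq> B" using PB[OF s] by (auto simp: P_def)
    show "continuous_on {min 0 (x \<mu>)..max 0 (x \<mu>)} (\<lambda>t. H (P s t))"
      unfolding P_def I_def[symmetric]
      by (rule continuous_on_compose2[OF _ continuous_on_fun_upd img]) (use H in \<open>simp add: cont_pdiff_def\<close>)
  qed
  then show ?thesis using j\<mu> by (simp add: axis_integral_def P_def)
qed

lemma pd_axis_integral_same:
  "continuous_on B H \<Longrightarrow> \<mu> < n \<Longrightarrow> x \<in> B \<Longrightarrow> pd \<mu> (axis_integral \<mu> H) x = H x"
  unfolding pd_def by (intro DERIV_imp_deriv axis_integral_has_derivative_same)

lemma pd_axis_integral_other:
  "cont_pdiff H \<Longrightarrow> continuous_on B (pd j H) \<Longrightarrow> j < n \<Longrightarrow> \<mu> < n \<Longrightarrow> j \<noteq> \<mu> \<Longrightarrow> x \<in> B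
   \<Longrightarrow> pd j (axis_integral \<mu> H) x = axis_integral \<mu> (pd j H) x"
  unfolding pd_def[of j "axis_integral \<mu> H"] by (intro DERIV_imp_deriv axis_integral_has_derivative_other)

lemma cont_pdiff_axis_integral:
  assumes H: "cont_pdiff H" and Hj: "\<And>j. j < n \<Longrightarrow> continuous_on B (pd j H)" and \<mu>: "\<mu> < n"
  shows "cont_pdiff (axis_integral \<mu> H)"
  unfolding cont_pdiff_def
proof (intro conjI allI impI ballI)
  show "continuous_on B (axis_integral \<mu> H)"
    using H \<mu> by (intro continuous_on_axis_integral) (simp add: cont_pdiff_def)
  fix i x assume i: "i < n" and x: "x \<in> B"
  show "(\<lambda>t. axis_integral \<mu> H (x(i := t))) differentiable at (x i)"
    using axis_integral_has_derivative_same[of H \<mu> x] axis_integral_has_derivative_other[OF H Hj[OF i] i \<mu> _ x]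
      H \<mu> x real_differentiable_def unfolding cont_pdiff_def by (cases "i = \<mu>") auto
qed

text \<open>Integration along an axis costs one order of smoothness, since the partial derivatives
  transversal to the axis are differentiated under the integral sign.\<close>

lemma smooth_upto_axis_integral: "smooth_upto (Suc k) H \<Longrightarrow> \<mu> < n \<Longrightarrow> smooth_upto k (axis_integral \<mu> H)"
proof (induction k arbitrary: H)
  case 0
  then have "cont_pdiff H" "\<And>j. j < n \<Longrightarrow> continuous_on B (pd j H)"
    by (auto simp: smooth_upto_Suc smooth_upto_0 cont_pdiff_def)
  then show ?case using 0 by (simp add: smooth_upto_0 cont_pdiff_axis_integral)
next
  case (Suc k)
  have \<mu>: "\<mu> < n" by (rule Suc.prems(2))
  have H: "cont_pdiff H" and Hj: "\<And>j. j < n \<Longrightarrow> smooth_upto (Suc k) (pd j H)"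
    using Suc.prems(1) by (auto simp: smooth_upto_Suc[of "Suc k"])
  have Hjc: "continuous_on B (pd j H)" if "j < n" for j
    using Hj[OF that] by (auto simp: smooth_upto_Suc cont_pdiff_def)
  have Hk: "smooth_upto k H" by (rule smooth_upto_mono[OF Suc.prems(1)]) simp
  show ?case unfolding smooth_upto_Suc
  proof (intro conjI allI impI)
    show "cont_pdiff (axis_integral \<mu> H)" by (rule cont_pdiff_axis_integral[OF H Hjc \<mu>])
    fix i assume i: "i < n"
    show "smooth_upto k (pd i (axis_integral \<mu> H))"
    proof (cases "i = \<mu>")
      case True
      show ?thesis
        by (rule smooth_upto_cong[OF _ Hk]) (use H \<mu> True in \<open>simp add: pd_axis_integral_same cont_pdiff_def\<close>)
    next
      case False
      show ?thesis
        by (rule smooth_upto_cong[OF _ Suc.IH[OF Hj[OF i] \<mu>]])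
          (use H Hjc i \<mu> False in \<open>simp add: pd_axis_integral_other\<close>)
    qed
  qed
qed

lemma pd_commute:
  assumes F: "smooth_upto 2 F" and i: "i < n" and j: "j < n" and x: "x \<in> B"
  shows "pd j (pd i F) x = pd i (pd j F) x"
proof (cases "i = j")
  case False
  have cF: "cont_pdiff F" "cont_pdiff (pd i F)" "cont_pdiff (pd j F)"
    "cont_pdiff (pd j (pd i F))" "cont_pdiff (pd i (pd j F))"
    using F i j by (auto simp: numeral_2_eq_2 smooth_upto_Suc smooth_upto_0)
  define \<delta> where "\<delta> = min (r i - \<bar>x i\<bar>) (r j - \<bar>x j\<bar>)"
  have \<delta>: "\<delta> > 0" using in_box_coord[OF x i] in_box_coord[OF x j] by (auto simp: \<delta>_def)
  define P where "P = (\<lambda>s t. x(i := s, j := t))"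
  have PB: "P s t \<in> B" if "\<bar>s - x i\<bar> < \<delta>" "\<bar>t - x j\<bar> < \<delta>" for s t
    using that box_upd[OF box_upd[OF x i] j, of s t] by (auto simp: P_def \<delta>_def)
  have Pi: "(P s t)(i := s') = P s' t" "P s t i = s" for s t s' using False by (auto simp: P_def fun_upd_twist)
  have Pj: "(P s t)(j := t') = P s t'" "P s t j = t" for s t t' by (auto simp: P_def)
  have DI: "((\<lambda>s'. G (P s' t)) has_real_derivative pd i G (P s t)) (at s)"
    if "cont_pdiff G" "\<bar>s - x i\<bar> < \<delta>" "\<bar>t - x j\<bar> < \<delta>" for G s t
    using cont_pdiff_has_derivative[OF that(1) PB[OF that(2,3)] i] by (simp add: Pi)
  have DJ: "((\<lambda>t'. G (P s t')) has_real_derivative pd j G (P s t)) (at t)"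
    if "cont_pdiff G" "\<bar>s - x i\<bar> < \<delta>" "\<bar>t - x j\<bar> < \<delta>" for G s t
    using cont_pdiff_has_derivative[OF that(1) PB[OF that(2,3)] j] by (simp add: Pj)
  interpret mixed_partials_2d "\<lambda>s t. F (P s t)" "\<lambda>s t. pd i F (P s t)" "\<lambda>s t. pd j F (P s t)"
    "\<lambda>s t. pd j (pd i F) (P s t)" "\<lambda>s t. pd i (pd j F) (P s t)" "x i" "x j" \<delta>
    by unfold_locales (use cF in \<open>auto intro: DI DJ\<close>)
  define V where "V = {x i - \<delta><..<x i + \<delta>} \<times> {x j - \<delta><..<x j + \<delta>}"
  have img: "(\<lambda>p. x(i := fst p, j := snd p)) ` V \<subseteq> B"
    using PB by (auto simp: V_def P_def abs_less_iff)
  have "continuous (at (x i, x j)) (\<lambda>p. G (P (fst p) (snd p)))" if "cont_pdiff G" for G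
  proof -
    have "continuous_on V (\<lambda>p. G (x(i := fst p, j := snd p)))"
      by (rule continuous_on_compose2[OF _ continuous_on_fun_upd2 img]) (use that in \<open>simp add: cont_pdiff_def\<close>)
    then have "continuous (at (x i, x j)) (\<lambda>p. G (x(i := fst p, j := snd p)))"
      by (rule continuous_on_interior) (use \<delta> in \<open>simp add: V_def interior_open open_Times\<close>)
    then show ?thesis by (simp add: P_def)
  qed
  then have "pd j (pd i F) (P (x i) (x j)) = pd i (pd j F) (P (x i) (x j))"
    using \<delta> cF by (intro mixed_partials_eq)
  then show ?thesis by (simp add: P_def)
qed simp

lemma smooth_const: "smooth_on n B (\<lambda>x. c)"
  unfolding smooth_on_iff_smooth_upto by (simp add: smooth_upto_const)

lemma smooth_add: "smooth_on n B f \<Longrightarrow> smooth_on n B g \<Longrightarrow> smooth_on n B (\<lambda>x. f x + g x)"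
  unfolding smooth_on_iff_smooth_upto by (simp add: smooth_upto_add)

lemma smooth_mult: "smooth_on n B f \<Longrightarrow> smooth_on n B g \<Longrightarrow> smooth_on n B (\<lambda>x. f x * g x)"
  unfolding smooth_on_iff_smooth_upto by (simp add: smooth_upto_mult)

lemma smooth_sum:
  "finite A \<Longrightarrow> (\<And>a. a \<in> A \<Longrightarrow> smooth_on n B (F a)) \<Longrightarrow> smooth_on n B (\<lambda>x. \<Sum>a\<in>A. F a x)"
  by (induction A rule: finite_induct) (auto intro: smooth_const smooth_add)

lemma smooth_coordinate: "smooth_on n B (\<lambda>x. x j)"
  unfolding smooth_on_iff_smooth_upto by (simp add: smooth_upto_coordinate)

lemma smooth_zero_below: "smooth_on n B u \<Longrightarrow> smooth_on n B (\<lambda>x. u (zero_below \<mu> x))"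
  unfolding smooth_on_iff_smooth_upto by (simp add: smooth_upto_zero_below)

lemma smooth_axis_integral: "smooth_on n B H \<Longrightarrow> \<mu> < n \<Longrightarrow> smooth_on n B (axis_integral \<mu> H)"
  unfolding smooth_on_iff_smooth_upto using smooth_upto_axis_integral by blast

lemma smooth_pd: "smooth_on n B f \<Longrightarrow> i < n \<Longrightarrow> smooth_on n B (pd i f)"
  unfolding smooth_on_iff_smooth_upto using smooth_upto_Suc by blast

lemma smooth_imp_cont_pdiff: "smooth_on n B f \<Longrightarrow> cont_pdiff f"
  unfolding smooth_on_iff_smooth_upto using smooth_upto_0 by blast

lemma smooth_imp_continuous: "smooth_on n B f \<Longrightarrow> continuous_on B f"
  using smooth_imp_cont_pdiff cont_pdiff_def by blast

lemma smooth_pd_commute: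
  "smooth_on n B F \<Longrightarrow> i < n \<Longrightarrow> j < n \<Longrightarrow> x \<in> B \<Longrightarrow> pd j (pd i F) x = pd i (pd j F) x"
  unfolding smooth_on_iff_smooth_upto using pd_commute by blast

end

section \<open>The potential \<open>hhat\<close>\<close>

definition tail_quadratic :: "nat \<Rightarrow> nat \<Rightarrow> real \<Rightarrow> pt \<Rightarrow> real" where
  "tail_quadratic n m w x = w / 2 * (\<Sum>a<m. (x (n - m + a))\<^sup>2)"

lemma hhat_eq_axis_integrals:
  "hhat n m u w = (\<lambda>x. (\<Sum>\<mu><n-m. axis_integral \<mu> (\<lambda>y. u \<mu> (zero_below \<mu> y)) x) + tail_quadratic n m w x)"
proof -
  have "(\<lambda>t. u \<mu> (\<lambda>i. if i < \<mu> then 0 else if i = \<mu> then t else x i)) = (\<lambda>t. u \<mu> (zero_below \<mu> (x(\<mu> := t))))"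
    for \<mu> x by (rule ext) (simp add: zero_below_def fun_upd_def)
  then show ?thesis unfolding hhat_def axis_integral_def tail_quadratic_def by simp
qed

lemma hhat_eq_tail_quadratic: "(\<And>\<mu>. \<mu> < n - m \<Longrightarrow> x \<mu> = 0) \<Longrightarrow> hhat n m u w x = tail_quadratic n m w x"
  unfolding hhat_def tail_quadratic_def oint_def by simp

lemma tail_quadratic_upd_low: "\<nu> < n - m \<Longrightarrow> tail_quadratic n m w (x(\<nu> := t)) = tail_quadratic n m w x"
  unfolding tail_quadratic_def by (intro arg_cong[where f = "(*) _"] sum.cong) auto

lemma tail_quadratic_has_derivative:
  assumes "n - m \<le> j" "j < n" "m \<le> n"
  shows "((\<lambda>t. tail_quadratic n m w (x(j := t))) has_real_derivative w * t0) (at t0)"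
proof -
  define b where "b = j - (n - m)"
  have b: "b < m" "j = n - m + b" using assms by (auto simp: b_def)
  define C where "C = (\<Sum>a<m. (x (n - m + a))\<^sup>2)"
  have e: "tail_quadratic n m w (x(j := t)) = w / 2 * ((t\<^sup>2 - (x j)\<^sup>2) + C)" for t
  proof -
    have "(\<Sum>a<m. ((x(j := t)) (n - m + a))\<^sup>2)
        = (\<Sum>a<m. (if a = b then t\<^sup>2 - (x j)\<^sup>2 else 0) + (x (n - m + a))\<^sup>2)"
      using b by (intro sum.cong) auto
    then show ?thesis using b by (simp add: sum.distrib C_def tail_quadratic_def)
  qed
  have "((\<lambda>t. w / 2 * ((t\<^sup>2 - (x j)\<^sup>2) + C)) has_real_derivative w / 2 * ((2 * t0 - 0) + 0)) (at t0)"
    by (intro DERIV_cmult DERIV_add DERIV_diff DERIV_const) (auto intro!: derivative_eq_intros)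
  then show ?thesis unfolding e by simp
qed

lemma sum_telescope_upto:
  "(\<nu>::nat) < N \<Longrightarrow>
   (\<Sum>\<mu><N. if \<mu> < \<nu> then A \<mu> - A (Suc \<mu>) else if \<mu> = \<nu> then A \<nu> else (0::real)) = A 0"
proof (induction N)
  case (Suc N)
  show ?case
  proof (cases "\<nu> < N")
    case True
    then show ?thesis using Suc by simp
  next
    case False
    then have \<nu>: "\<nu> = N" using Suc.prems by simp
    have "(\<Sum>\<mu><N. if \<mu> < \<nu> then A \<mu> - A (Suc \<mu>) else if \<mu> = \<nu> then A \<nu> else 0)
        = (\<Sum>\<mu><N. A \<mu> - A (Suc \<mu>))"
      using \<nu> by (intro sum.cong) auto
    then show ?thesis using \<nu> by (simp add: sum_lessThan_telescope')
  qed
qed simp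

context coord_box
begin

lemma smooth_tail_quadratic: "smooth_on n B (tail_quadratic n m w)"
proof -
  have "smooth_on n B (\<lambda>x. w / 2 * (\<Sum>a<m. x (n - m + a) * x (n - m + a)))"
    by (intro smooth_mult smooth_const smooth_sum smooth_coordinate) auto
  then show ?thesis unfolding tail_quadratic_def by (simp add: power2_eq_square)
qed

lemma smooth_hhat:
  assumes "\<forall>\<mu><n - m. smooth_on n B (u \<mu>)"
  shows "smooth_on n B (hhat n m u w)"
  unfolding hhat_eq_axis_integrals using assms
  by (intro smooth_add smooth_sum smooth_axis_integral smooth_zero_below smooth_tail_quadratic) auto

lemma axis_integral_pd_zero_below:
  assumes u: "smooth_on n B u" and \<mu>: "\<mu> < n" and x: "x \<in> B"
  shows "axis_integral \<mu> (\<lambda>y. pd \<mu> u (zero_below \<mu> y)) x = u (zero_below \<mu> x) - u (zero_below (Suc \<mu>) x)"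
proof -
  have "oint 0 (x \<mu>) (\<lambda>t. pd \<mu> u (zero_below \<mu> (x(\<mu> := t))))
      = u (zero_below \<mu> (x(\<mu> := x \<mu>))) - u (zero_below \<mu> (x(\<mu> := 0)))"
  proof (rule oint_fundamental_theorem)
    fix t assume t: "t \<in> {min 0 (x \<mu>)..max 0 (x \<mu>)}"
    define y where "y = zero_below \<mu> (x(\<mu> := t))"
    have "y \<in> B" unfolding y_def using segment_in_box[OF x \<mu> t] zero_below_in_box by blast
    moreover have "y(\<mu> := s) = zero_below \<mu> (x(\<mu> := s))" for s by (simp add: y_def zero_below_upd_high)
    moreover have "y \<mu> = t" by (simp add: y_def zero_below_def)
    ultimately show "((\<lambda>t. u (zero_below \<mu> (x(\<mu> := t)))) has_real_derivative pd \<mu> u (zero_below \<mu> (x(\<mu> := t)))) (at t)"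
      using cont_pdiff_has_derivative[OF smooth_imp_cont_pdiff[OF u], of y \<mu>] \<mu> by (simp add: y_def)
  qed
  then show ?thesis by (simp add: axis_integral_def zero_below_upd_Suc)
qed

lemma pd_hhat_summand:
  assumes u: "\<forall>\<mu><n - m. smooth_on n B (u \<mu>)"
    and sym: "\<forall>\<mu><n-m. \<forall>\<nu><n-m. \<forall>x\<in>B. pd \<mu> (u \<nu>) x = pd \<nu> (u \<mu>) x"
    and \<mu>: "\<mu> < n - m" and \<nu>: "\<nu> < n - m" and x: "x \<in> B"
  shows "pd \<nu> (axis_integral \<mu> (\<lambda>y. u \<mu> (zero_below \<mu> y))) x
    = (if \<mu> < \<nu> then u \<nu> (zero_below \<mu> x) - u \<nu> (zero_below (Suc \<mu>) x)
       else if \<mu> = \<nu> then u \<nu> (zero_below \<nu> x) else 0)"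
proof -
  have su: "smooth_on n B (\<lambda>y. u \<mu> (zero_below \<mu> y))" using u \<mu> by (simp add: smooth_zero_below)
  consider "\<mu> = \<nu>" | "\<nu> < \<mu>" | "\<mu> < \<nu>" by linarith
  then show ?thesis
  proof cases
    case 1
    then show ?thesis using pd_axis_integral_same[OF smooth_imp_continuous[OF su] _ x] \<mu> by simp
  next
    case 2
    have "pd \<nu> (axis_integral \<mu> (\<lambda>y. u \<mu> (zero_below \<mu> y))) x
        = axis_integral \<mu> (pd \<nu> (\<lambda>y. u \<mu> (zero_below \<mu> y))) x"
      using 2 \<mu> \<nu> x smooth_imp_cont_pdiff[OF su] smooth_imp_continuous[OF smooth_pd[OF su]]
      by (intro pd_axis_integral_other) auto
    also have "pd \<nu> (\<lambda>y. u \<mu> (zero_below \<mu> y)) = (\<lambda>y. 0)"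
      using 2 by (intro ext) (simp add: pd_zero_below)
    finally show ?thesis using 2 by (simp add: axis_integral_zero)
  next
    case 3
    have "pd \<nu> (axis_integral \<mu> (\<lambda>y. u \<mu> (zero_below \<mu> y))) x
        = axis_integral \<mu> (pd \<nu> (\<lambda>y. u \<mu> (zero_below \<mu> y))) x"
      using 3 \<mu> \<nu> x smooth_imp_cont_pdiff[OF su] smooth_imp_continuous[OF smooth_pd[OF su]]
      by (intro pd_axis_integral_other) auto
    also have "pd \<nu> (\<lambda>y. u \<mu> (zero_below \<mu> y)) = (\<lambda>y. pd \<nu> (u \<mu>) (zero_below \<mu> y))"
      using 3 by (intro ext) (simp add: pd_zero_below)
    also have "axis_integral \<mu> (\<lambda>y. pd \<nu> (u \<mu>) (zero_below \<mu> y)) x = axis_integral \<mu> (\<lambda>y. pd \<mu> (u \<nu>) (zero_below \<mu> y)) x"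
      unfolding axis_integral_def
      using sym \<mu> \<nu> segment_in_box[OF x] zero_below_in_box by (intro oint_cong) auto
    also have "\<dots> = u \<nu> (zero_below \<mu> x) - u \<nu> (zero_below (Suc \<mu>) x)"
      using u \<nu> \<mu> x by (intro axis_integral_pd_zero_below) auto
    finally show ?thesis using 3 by simp
  qed
qed

text \<open>Under the symmetry condition the \<open>\<nu>\<close>-th partial derivatives of the summands of \<open>hhat\<close>
  telescope to \<open>u \<nu> x\<close>.\<close>

lemma pd_hhat_low:
  assumes mn: "m < n" and u: "\<forall>\<mu><n - m. smooth_on n B (u \<mu>)"
    and sym: "\<forall>\<mu><n-m. \<forall>\<nu><n-m. \<forall>x\<in>B. pd \<mu> (u \<nu>) x = pd \<nu> (u \<mu>) x"
    and \<nu>: "\<nu> < n - m" and x: "x \<in> B"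
  shows "pd \<nu> (hhat n m u w) x = u \<nu> x"
proof -
  have su: "smooth_on n B (axis_integral \<mu> (\<lambda>y. u \<mu> (zero_below \<mu> y)))" if "\<mu> < n - m" for \<mu>
    using u that by (intro smooth_axis_integral smooth_zero_below) auto
  have cs: "cont_pdiff (\<lambda>x. \<Sum>\<mu><n-m. axis_integral \<mu> (\<lambda>y. u \<mu> (zero_below \<mu> y)) x)"
    using su by (intro cont_pdiff_sum smooth_imp_cont_pdiff) auto
  have \<nu>n: "\<nu> < n" using \<nu> by simp
  have "pd \<nu> (hhat n m u w) x
      = pd \<nu> (\<lambda>x. \<Sum>\<mu><n-m. axis_integral \<mu> (\<lambda>y. u \<mu> (zero_below \<mu> y)) x) x + pd \<nu> (tail_quadratic n m w) x"
    unfolding hhat_eq_axis_integrals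
    by (rule pd_add[OF cs smooth_imp_cont_pdiff[OF smooth_tail_quadratic] x \<nu>n])
  also have "pd \<nu> (\<lambda>x. \<Sum>\<mu><n-m. axis_integral \<mu> (\<lambda>y. u \<mu> (zero_below \<mu> y)) x) x
      = (\<Sum>\<mu><n-m. pd \<nu> (axis_integral \<mu> (\<lambda>y. u \<mu> (zero_below \<mu> y))) x)"
    using su x \<nu>n by (intro pd_sum smooth_imp_cont_pdiff) auto
  also have "pd \<nu> (tail_quadratic n m w) x = 0"
    using \<nu> by (simp add: pd_def tail_quadratic_upd_low)
  also have "(\<Sum>\<mu><n-m. pd \<nu> (axis_integral \<mu> (\<lambda>y. u \<mu> (zero_below \<mu> y))) x)
      = (\<Sum>\<mu><n-m. if \<mu> < \<nu> then u \<nu> (zero_below \<mu> x) - u \<nu> (zero_below (Suc \<mu>) x)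
                  else if \<mu> = \<nu> then u \<nu> (zero_below \<nu> x) else 0)"
    using pd_hhat_summand[OF u sym _ \<nu> x] by simp
  also have "\<dots> = u \<nu> x" using sum_telescope_upto[OF \<nu>, of "\<lambda>\<mu>. u \<nu> (zero_below \<mu> x)"] by simp
  finally show ?thesis by simp
qed

lemma pd_hhat_tail:
  assumes "m < n" "n - m \<le> j" "j < n" "\<And>\<mu>. \<mu> < n - m \<Longrightarrow> y \<mu> = 0"
  shows "pd j (hhat n m u w) y = w * y j"
proof -
  have "(\<lambda>t. hhat n m u w (y(j := t))) = (\<lambda>t. tail_quadratic n m w (y(j := t)))"
    using assms by (intro ext hhat_eq_tail_quadratic) auto
  then show ?thesis
    unfolding pd_def using assms by (simp add: DERIV_imp_deriv tail_quadratic_has_derivative)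
qed

lemma hessian_hhat_tail:
  assumes "m < n" "n - m \<le> i" "i < n" "n - m \<le> j" "j < n"
  shows "pd i (pd j (hhat n m u w)) (\<lambda>_. 0) = (if i = j then w else 0)"
proof -
  have "pd j (hhat n m u w) ((\<lambda>_. 0)(i := s)) = w * (if i = j then s else 0)" for s
    using pd_hhat_tail[where y = "(\<lambda>_. 0)(i := s)"] assms by auto
  then have "pd i (pd j (hhat n m u w)) (\<lambda>_. 0) = deriv (\<lambda>s. w * (if i = j then s else 0)) 0"
    by (simp add: pd_def)
  also have "\<dots> = (if i = j then w else 0)"
    by (cases "i = j") (auto intro!: DERIV_imp_deriv derivative_eq_intros)
  finally show ?thesis .
qed

lemma potential_exists_iff_symmetric:
  assumes mn: "m < n" and u: "\<forall>\<mu><n - m. smooth_on n B (u \<mu>)"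
  shows "(\<exists>hh. smooth_on n B hh \<and> (\<forall>\<mu><n-m. \<forall>x\<in>B. pd \<mu> hh x = u \<mu> x))
    \<longleftrightarrow> (\<forall>\<mu><n-m. \<forall>\<nu><n-m. \<forall>x\<in>B. pd \<mu> (u \<nu>) x = pd \<nu> (u \<mu>) x)"
proof
  assume "\<exists>hh. smooth_on n B hh \<and> (\<forall>\<mu><n-m. \<forall>x\<in>B. pd \<mu> hh x = u \<mu> x)"
  then obtain hh where hh: "smooth_on n B hh" and grad: "\<forall>\<mu><n-m. \<forall>x\<in>B. pd \<mu> hh x = u \<mu> x"
    by blast
  show "\<forall>\<mu><n-m. \<forall>\<nu><n-m. \<forall>x\<in>B. pd \<mu> (u \<nu>) x = pd \<nu> (u \<mu>) x"
  proof (intro allI impI ballI)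
    fix \<mu> \<nu> x assume \<mu>: "\<mu> < n - m" and \<nu>: "\<nu> < n - m" and x: "x \<in> B"
    have "pd \<mu> (u \<nu>) x = pd \<mu> (pd \<nu> hh) x" using grad \<mu> \<nu> x by (intro pd_cong) auto
    also have "\<dots> = pd \<nu> (pd \<mu> hh) x" using hh \<mu> \<nu> x by (intro smooth_pd_commute) auto
    also have "\<dots> = pd \<nu> (u \<mu>) x" using grad \<mu> \<nu> x by (intro pd_cong) auto
    finally show "pd \<mu> (u \<nu>) x = pd \<nu> (u \<mu>) x" .
  qed
next
  assume "\<forall>\<mu><n-m. \<forall>\<nu><n-m. \<forall>x\<in>B. pd \<mu> (u \<nu>) x = pd \<nu> (u \<mu>) x"
  then show "\<exists>hh. smooth_on n B hh \<and> (\<forall>\<mu><n-m. \<forall>x\<in>B. pd \<mu> hh x = u \<mu> x)"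
    using smooth_hhat[OF u] pd_hhat_low[OF mn u] by blast
qed

lemma hhat_critical:
  assumes mn: "m < n" and u: "\<forall>\<mu><n - m. smooth_on n B (u \<mu>)"
    and sym: "\<forall>\<mu><n-m. \<forall>\<nu><n-m. \<forall>x\<in>B. pd \<mu> (u \<nu>) x = pd \<nu> (u \<mu>) x"
    and u0: "\<forall>\<mu><n-m. u \<mu> (\<lambda>_. 0) = 0"
  shows "\<forall>k<n. pd k (hhat n m u w) (\<lambda>_. 0) = 0"
proof (intro allI impI)
  fix k assume "k < n"
  then show "pd k (hhat n m u w) (\<lambda>_. 0) = 0"
    using pd_hhat_low[OF mn u sym, of k "\<lambda>_. 0"] zero_in_box u0 pd_hhat_tail[OF mn _ _, of k "\<lambda>_. 0"]
    by (cases "k < n - m") auto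
qed

lemma hhat_critical_posdef:
  assumes mn: "m < n" and u: "\<forall>\<mu><n - m. smooth_on n B (u \<mu>)"
    and sym: "\<forall>\<mu><n-m. \<forall>\<nu><n-m. \<forall>x\<in>B. pd \<mu> (u \<nu>) x = pd \<nu> (u \<mu>) x"
    and M: "posdef (n-m) (\<lambda>\<mu> \<nu>. pd \<mu> (u \<nu>) (\<lambda>_. 0))"
    and w: "w > (1 / lambda_min (n-m) (\<lambda>\<mu> \<nu>. pd \<mu> (u \<nu>) (\<lambda>_. 0))) *
              (\<Sum>\<mu><n-m. \<Sum>a<m. (pd (n-m+a) (u \<mu>) (\<lambda>_. 0))\<^sup>2)"
  shows "posdef n (\<lambda>i j. pd i (pd j (hhat n m u w)) (\<lambda>_. 0))"
proof -
  define N where "N = n - m"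
  have n: "n = N + m" and N: "0 < N" using mn by (auto simp: N_def)
  have grad: "pd \<nu> (hhat n m u w) x = u \<nu> x" if "\<nu> < N" "x \<in> B" for \<nu> x
    using pd_hhat_low[OF mn u sym] that by (simp add: N_def)
  define H where "H = (\<lambda>i j. pd i (pd j (hhat n m u w)) (\<lambda>_. 0))"
  have H_low: "H i \<nu> = pd i (u \<nu>) (\<lambda>_. 0)" if "i < n" "\<nu> < N" for i \<nu>
    unfolding H_def using grad that zero_in_box by (intro pd_cong) auto
  have "posdef (N + m) H"
  proof (rule posdef_block_scalar_tail[OF N M[folded N_def]])
    show "\<forall>i<N + m. \<forall>j<N + m. H i j = H j i"
    proof (intro allI impI)
      fix i j assume "i < N + m" "j < N + m"
      then show "H i j = H j i"
        unfolding H_def using smooth_pd_commute[OF smooth_hhat[OF u], of j i "\<lambda>_. 0"] zero_in_box n by simp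
    qed
    show "\<forall>i<N. \<forall>j<N. H i j = pd i (u j) (\<lambda>_. 0)" using H_low n by simp
    show "\<forall>a<m. \<forall>b<m. H (N + a) (N + b) = (if a = b then w else 0)"
    proof (intro allI impI)
      fix a b assume "a < m" "b < m"
      then have "n - m \<le> N + a" "N + a < n" "n - m \<le> N + b" "N + b < n" using mn by (auto simp: N_def)
      then show "H (N + a) (N + b) = (if a = b then w else 0)"
        unfolding H_def using hessian_hhat_tail[OF mn] by simp
    qed
    have "(\<Sum>\<nu><N. \<Sum>a<m. (H (N + a) \<nu>)\<^sup>2) = (\<Sum>\<mu><n-m. \<Sum>a<m. (pd (n-m+a) (u \<mu>) (\<lambda>_. 0))\<^sup>2)"
      using H_low mn by (intro sum.cong refl) (auto simp: N_def)
    moreover have "lambda_min N (\<lambda>\<mu> \<nu>. pd \<mu> (u \<nu>) (\<lambda>_. 0)) > 0"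
      using lambda_min_pos[OF N] M by (simp add: N_def)
    ultimately show "w * lambda_min N (\<lambda>\<mu> \<nu>. pd \<mu> (u \<nu>) (\<lambda>_. 0)) > (\<Sum>\<nu><N. \<Sum>a<m. (H (N + a) \<nu>)\<^sup>2)"
      using w by (simp add: N_def pos_divide_less_eq)
  qed
  then show ?thesis by (simp add: H_def n)
qed

lemma critical_posdef_potential_iff:
  assumes mn: "m < n" and u: "\<forall>\<mu><n - m. smooth_on n B (u \<mu>)"
    and sym: "\<forall>\<mu><n-m. \<forall>\<nu><n-m. \<forall>x\<in>B. pd \<mu> (u \<nu>) x = pd \<nu> (u \<mu>) x"
    and u0: "\<forall>\<mu><n-m. u \<mu> (\<lambda>_. 0) = 0"
  shows "(\<exists>hh. smooth_on n B hh \<and> (\<forall>\<mu><n-m. \<forall>x\<in>B. pd \<mu> hh x = u \<mu> x) \<and>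
           (\<forall>k<n. pd k hh (\<lambda>_. 0) = 0) \<and> posdef n (\<lambda>i j. pd i (pd j hh) (\<lambda>_. 0)))
    \<longleftrightarrow> posdef (n-m) (\<lambda>\<mu> \<nu>. pd \<mu> (u \<nu>) (\<lambda>_. 0))"
proof
  assume "\<exists>hh. smooth_on n B hh \<and> (\<forall>\<mu><n-m. \<forall>x\<in>B. pd \<mu> hh x = u \<mu> x) \<and>
           (\<forall>k<n. pd k hh (\<lambda>_. 0) = 0) \<and> posdef n (\<lambda>i j. pd i (pd j hh) (\<lambda>_. 0))"
  then obtain hh where grad: "\<forall>\<mu><n-m. \<forall>x\<in>B. pd \<mu> hh x = u \<mu> x"
    and hess: "posdef n (\<lambda>i j. pd i (pd j hh) (\<lambda>_. 0))" by blast
  have "posdef (n-m) (\<lambda>i j. pd i (pd j hh) (\<lambda>_. 0))" by (rule posdef_leading_block[OF hess]) simp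
  moreover have "pd i (pd j hh) (\<lambda>_. 0) = pd i (u j) (\<lambda>_. 0)" if "i < n - m" "j < n - m" for i j
    using grad that zero_in_box by (intro pd_cong) auto
  ultimately show "posdef (n-m) (\<lambda>\<mu> \<nu>. pd \<mu> (u \<nu>) (\<lambda>_. 0))" by (simp add: posdef_def)
next
  assume M: "posdef (n-m) (\<lambda>\<mu> \<nu>. pd \<mu> (u \<nu>) (\<lambda>_. 0))"
  define w where "w = (1 / lambda_min (n-m) (\<lambda>\<mu> \<nu>. pd \<mu> (u \<nu>) (\<lambda>_. 0))) *
      (\<Sum>\<mu><n-m. \<Sum>a<m. (pd (n-m+a) (u \<mu>) (\<lambda>_. 0))\<^sup>2) + 1"
  show "\<exists>hh. smooth_on n B hh \<and> (\<forall>\<mu><n-m. \<forall>x\<in>B. pd \<mu> hh x = u \<mu> x) \<and>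
           (\<forall>k<n. pd k hh (\<lambda>_. 0) = 0) \<and> posdef n (\<lambda>i j. pd i (pd j hh) (\<lambda>_. 0))"
    using smooth_hhat[OF u, of w] pd_hhat_low[OF mn u sym] hhat_critical[OF mn u sym u0] hhat_critical_posdef[OF mn u sym M, of w]
    by (auto simp: w_def)
qed

lemma smooth_uloc:
  assumes "smooth_on n B h" "\<forall>k<n. \<forall>\<tau><n-m. smooth_on n B (P k \<tau>)"
    "\<forall>\<tau><n-m. \<forall>\<mu><n-m. smooth_on n B (K \<tau> \<mu>)" "\<mu> < n - m"
  shows "smooth_on n B (uloc n m h P K \<mu>)"
  unfolding uloc_def[abs_def] using assms
  by (intro smooth_sum smooth_mult smooth_pd) auto

text \<open>At a critical point of \<open>h\<close> the product rule leaves only the term in which the second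
  derivatives of \<open>h\<close> appear.\<close>

lemma pd_uloc_at_critical:
  assumes h: "smooth_on n B h" and P: "\<forall>k<n. \<forall>\<tau><n-m. smooth_on n B (P k \<tau>)"
    and K: "\<forall>\<tau><n-m. \<forall>\<mu><n-m. smooth_on n B (K \<tau> \<mu>)"
    and crit: "\<forall>k<n. pd k h (\<lambda>_. 0) = 0" and \<mu>: "\<mu> < n" and \<nu>: "\<nu> < n - m"
  shows "pd \<mu> (uloc n m h P K \<nu>) (\<lambda>_. 0)
    = (\<Sum>k<n. \<Sum>\<tau><n-m. pd \<mu> (pd k h) (\<lambda>_. 0) * P k \<tau> (\<lambda>_. 0) * K \<tau> \<nu> (\<lambda>_. 0))"
proof -
  have c: "cont_pdiff (pd k h)" "cont_pdiff (P k \<tau>)" "cont_pdiff (K \<tau> \<nu>)"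
    if "k < n" "\<tau> < n - m" for k \<tau>
    using that h P K \<nu> by (auto intro!: smooth_imp_cont_pdiff smooth_pd)
  have "pd \<mu> (\<lambda>x. pd k h x * P k \<tau> x * K \<tau> \<nu> x) (\<lambda>_. 0)
      = pd \<mu> (pd k h) (\<lambda>_. 0) * P k \<tau> (\<lambda>_. 0) * K \<tau> \<nu> (\<lambda>_. 0)"
    if "k < n" "\<tau> < n - m" for k \<tau>
    using c[OF that] crit that \<mu> zero_in_box by (simp add: pd_mult cont_pdiff_mult)
  moreover have "pd \<mu> (uloc n m h P K \<nu>) (\<lambda>_. 0)
      = (\<Sum>k<n. \<Sum>\<tau><n-m. pd \<mu> (\<lambda>x. pd k h x * P k \<tau> x * K \<tau> \<nu> x) (\<lambda>_. 0))"
  proof -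
    have "pd \<mu> (uloc n m h P K \<nu>) (\<lambda>_. 0)
        = (\<Sum>k<n. pd \<mu> (\<lambda>x. \<Sum>\<tau><n-m. pd k h x * P k \<tau> x * K \<tau> \<nu> x) (\<lambda>_. 0))"
      unfolding uloc_def[abs_def] using c \<mu> zero_in_box
      by (intro pd_sum cont_pdiff_sum cont_pdiff_mult) auto
    also have "\<dots> = (\<Sum>k<n. \<Sum>\<tau><n-m. pd \<mu> (\<lambda>x. pd k h x * P k \<tau> x * K \<tau> \<nu> x) (\<lambda>_. 0))"
      using c \<mu> zero_in_box by (intro sum.cong refl pd_sum cont_pdiff_mult) auto
    finally show ?thesis .
  qed
  ultimately show ?thesis by simp
qed

end

theorem mainTheorem8:
  fixes n m :: nat and r :: "nat \<Rightarrow> real" and h :: "pt \<Rightarrow> real"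
    and P K :: "nat \<Rightarrow> nat \<Rightarrow> pt \<Rightarrow> real"
  assumes "1 \<le> m" and "m < n"
    and "\<forall>i<n. 0 < r i"
    and "smooth_on n (box_n n r) h"
    and "\<forall>k<n. \<forall>\<tau><n-m. smooth_on n (box_n n r) (P k \<tau>)"
    and "\<forall>\<tau><n-m. \<forall>\<mu><n-m. smooth_on n (box_n n r) (K \<tau> \<mu>)"
    and "\<forall>\<tau><n-m. \<forall>\<mu><n-m. \<forall>x\<in>box_n n r. K \<tau> \<mu> x = K \<mu> \<tau> x"
    and "\<forall>k<n. pd k h (\<lambda>_. 0) = 0"
  shows
    "((\<exists>hh. smooth_on n (box_n n r) hh \<and>
           (\<forall>\<mu><n-m. \<forall>x\<in>box_n n r. pd \<mu> hh x = uloc n m h P K \<mu> x))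
      \<longleftrightarrow> (\<forall>\<mu><n-m. \<forall>\<nu><n-m. \<forall>x\<in>box_n n r.
             pd \<mu> (uloc n m h P K \<nu>) x = pd \<nu> (uloc n m h P K \<mu>) x))
   \<and>
    ((\<forall>\<mu><n-m. \<forall>\<nu><n-m. \<forall>x\<in>box_n n r.
             pd \<mu> (uloc n m h P K \<nu>) x = pd \<nu> (uloc n m h P K \<mu>) x) \<longrightarrow>
       (\<forall>w. smooth_on n (box_n n r) (hhat n m (uloc n m h P K) w) \<and>
           (\<forall>\<mu><n-m. \<forall>x\<in>box_n n r.
              pd \<mu> (hhat n m (uloc n m h P K) w) x = uloc n m h P K \<mu> x))
     \<and> (\<forall>\<mu><n-m. \<forall>\<nu><n-m. pd \<mu> (uloc n m h P K \<nu>) (\<lambda>_. 0) =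
           (\<Sum>k<n. \<Sum>\<tau><n-m. pd \<mu> (pd k h) (\<lambda>_. 0) * P k \<tau> (\<lambda>_. 0) * K \<tau> \<nu> (\<lambda>_. 0)))
     \<and> ((\<exists>hh. smooth_on n (box_n n r) hh \<and>
           (\<forall>\<mu><n-m. \<forall>x\<in>box_n n r. pd \<mu> hh x = uloc n m h P K \<mu> x) \<and>
           (\<forall>k<n. pd k hh (\<lambda>_. 0) = 0) \<and>
           posdef n (\<lambda>i j. pd i (pd j hh) (\<lambda>_. 0)))
        \<longleftrightarrow> posdef (n-m) (\<lambda>\<mu> \<nu>. pd \<mu> (uloc n m h P K \<nu>) (\<lambda>_. 0)))
     \<and> (posdef (n-m) (\<lambda>\<mu> \<nu>. pd \<mu> (uloc n m h P K \<nu>) (\<lambda>_. 0)) \<longrightarrow>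
         (\<forall>w. w > (1 / lambda_min (n-m) (\<lambda>\<mu> \<nu>. pd \<mu> (uloc n m h P K \<nu>) (\<lambda>_. 0))) *
                  (\<Sum>\<mu><n-m. \<Sum>a<m. (pd (n-m+a) (uloc n m h P K \<mu>) (\<lambda>_. 0))^2)
            \<longrightarrow> (\<forall>k<n. pd k (hhat n m (uloc n m h P K) w) (\<lambda>_. 0) = 0) \<and>
                posdef n (\<lambda>i j. pd i (pd j (hhat n m (uloc n m h P K) w)) (\<lambda>_. 0)))))"
proof -
  interpret coord_box n r using assms(3) by unfold_locales
  let ?u = "uloc n m h P K"
  have mn: "m < n" by fact
  have u: "\<forall>\<mu><n-m. smooth_on n B (?u \<mu>)" using assms(4-6) by (auto intro: smooth_uloc)
  have u0: "\<forall>\<mu><n-m. ?u \<mu> (\<lambda>_. 0) = 0" using assms(8) by (simp add: uloc_def)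
  have jacobian_u_at_0: "\<forall>\<mu><n-m. \<forall>\<nu><n-m. pd \<mu> (?u \<nu>) (\<lambda>_. 0) =
      (\<Sum>k<n. \<Sum>\<tau><n-m. pd \<mu> (pd k h) (\<lambda>_. 0) * P k \<tau> (\<lambda>_. 0) * K \<tau> \<nu> (\<lambda>_. 0))"
    using pd_uloc_at_critical[OF assms(4-6,8)] by simp
  show ?thesis
    using potential_exists_iff_symmetric[OF mn u] smooth_hhat[OF u] pd_hhat_low[OF mn u]
      critical_posdef_potential_iff[OF mn u _ u0] hhat_critical[OF mn u _ u0] hhat_critical_posdef[OF mn u]
      jacobian_u_at_0
    by blast
qed

end
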